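(* Let $d\geq 1$ be an integer. Then $M''(3,2,d)=d+1$.
   Context: All measures are probability measures on $\mathbb{R}^d$ absolutely continuous with respect to Lebesgue measure. A partition of $\mathbb{R}^d$ into $n$ parts formed by iterated hyperplane cuts is an ordered tuple $(K_1,\dots,K_n)$ of closed convex sets (some possibly empty) obtained by starting from the single part $\mathbb{R}^d$ and repeatedly choosing one existing part $C$ and replacing it by $C\cap H^+$ and $C\cap H^-$, where $H^+,H^-$ are the two closed half-spaces of an affine hyperplane (degenerate choices $\{\emptyset,\mathbb{R}^d\}$ allowed), until there are $n$ parts. $M''(n,r,d)$ is the largest integer $M''$ such that for any $M''$ measures $\mu_1,\dots,\mu_{M''}$ on $\mathbb{R}^d$ there is such a partition $(K_1,\dots,K_n)$ and a map $\ell\colon[n]\to[r]$ with $\mu_j\big(\bigcup_{i\in\ell^{-1}(s)}K_i\big)=\tfrac1r$ for all $1\le j\le M''$ and $1\le s\le r$. *)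

theory Defs
  imports "HOL-Probability.Probability"
begin

definition admissible_measure :: "'a::euclidean_space measure \<Rightarrow> bool" where
  "admissible_measure \<mu> \<longleftrightarrow>
     sets \<mu> = sets borel \<and> prob_space \<mu> \<and> absolutely_continuous lborel \<mu>"

definition halfspace_pair :: "'a::euclidean_space set \<Rightarrow> 'a set \<Rightarrow> bool" where
  "halfspace_pair H1 H2 \<longleftrightarrow>
     (\<exists>a b. a \<noteq> 0 \<and> H1 = {x. a \<bullet> x \<le> b} \<and> H2 = {x. a \<bullet> x \<ge> b})
     \<or> (H1 = {} \<and> H2 = UNIV) \<or> (H1 = UNIV \<and> H2 = {})"

inductive iter_cut :: "'a::euclidean_space set list \<Rightarrow> bool" where
  start: "iter_cut [UNIV]"
| cut: "iter_cut Ks \<Longrightarrow> i < length Ks \<Longrightarrow> halfspace_pair H1 H2 \<Longrightarrow>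
          iter_cut (Ks[i := Ks ! i \<inter> H1] @ [Ks ! i \<inter> H2])"

definition fair_splittable :: "nat \<Rightarrow> nat \<Rightarrow> 'a::euclidean_space itself \<Rightarrow> nat \<Rightarrow> bool" where
  "fair_splittable n r (_ :: 'a itself) m \<longleftrightarrow>
     (\<forall>\<mu> :: nat \<Rightarrow> 'a measure. (\<forall>j<m. admissible_measure (\<mu> j)) \<longrightarrow>
        (\<exists>Ks lab. iter_cut Ks \<and> length Ks = n \<and> (\<forall>i<n. lab i < r) \<and>
           (\<forall>j<m. \<forall>s<r. measure (\<mu> j) (\<Union>{Ks ! i | i. i < n \<and> lab i = s}) = 1 / real r)))"

text \<open>M''(n, r, d) with d = DIM('a): the largest such m.\<close>
definition M2 :: "nat \<Rightarrow> nat \<Rightarrow> 'a::euclidean_space itself \<Rightarrow> nat" where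
  "M2 n r T = (GREATEST m. fair_splittable n r T m)"

end

theory Submission
  imports Defs "HOL-Homology.Homology"
begin

text \<open>Let \<open>d = DIM('a)\<close>. The piece \<open>{x. a \<bullet> x \<le> c} \<inter> H\<^sub>t\<close>, where the half-space
  \<open>H\<^sub>t\<close> shrinks from the whole space to the empty set as \<open>t\<close> runs from 0 to 1, is parametrised
  by the point \<open>((a, c), t)\<close> of the upper hemisphere of the unit sphere in \<open>('a \<times> real) \<times> real\<close>.
  The \<open>d + 1\<close> values "measure of the piece minus 1/2" form a map that is odd on the equator, so it
  extends to an odd map from this \<open>(d + 1)\<close>-sphere to \<open>'a \<times> real\<close>, which vanishes somewhere by
  Borsuk--Ulam. The corresponding piece halves every measure, and the other two parts of the
  two cuts form the second class. Borsuk--Ulam follows from Borsuk's theorem that odd self-maps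
  of spheres have odd degree, proved by induction on the dimension: after a smooth approximation
  and a reflection, an odd map is homotopic to one preserving the equator, to which the
  library's degree step applies.

  With three parts and two labels one class is a single part or empty, hence closed
  and convex. Take the uniform measures on unit cubes at the vertices of a large simplex and at
  its centre. A convex set halving all of them meets every vertex cube but misses a point of the
  centre cube, and a hyperplane separating that point from the set has a whole vertex cube on
  the point's side.\<close>

section \<open>Odd maps of spheres and the Borsuk--Ulam theorem\<close>

definition nsphere_carrier :: "nat \<Rightarrow> (nat \<Rightarrow> real) set" where
  "nsphere_carrier n = {x. (\<Sum>i\<le>n. x i ^ 2) = 1 \<and> (\<forall>i>n. x i = 0)}"

lemma nsphere_eq_top_of_set: "nsphere n = top_of_set (nsphere_carrier n)"
  by (simp add: nsphere nsphere_carrier_def euclidean_product_topology)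

lemma topspace_nsphere: "topspace (nsphere n) = nsphere_carrier n"
  by (simp add: nsphere_eq_top_of_set)

lemma odd_Brouwer_degree2_0:
  assumes "continuous_map (nsphere 0) (nsphere 0) f"
    and "\<And>u. u \<in> nsphere_carrier 0 \<Longrightarrow> f (\<lambda>i. - u i) = (\<lambda>i. - f u i)"
  shows "odd (Brouwer_degree2 0 f)"
proof -
  define pole :: "nat \<Rightarrow> real" where "pole = (\<lambda>i. if i = 0 then 1 else 0)"
  define antipole :: "nat \<Rightarrow> real" where "antipole = (\<lambda>i. if i = 0 then -1 else 0)"
  have S: "x \<in> nsphere_carrier 0 \<longleftrightarrow> x = pole \<or> x = antipole" for x
    by (auto simp: nsphere_carrier_def pole_def antipole_def fun_eq_iff power2_eq_1_iff)
  have neg_pole: "(\<lambda>i. - pole i) = antipole" "(\<lambda>i. - antipole i) = pole"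
    by (auto simp: pole_def antipole_def fun_eq_iff)
  have f_pole: "f pole \<in> nsphere_carrier 0"
    using assms(1) S by (auto simp: nsphere_eq_top_of_set continuous_map_def)
  have f_antipole: "f antipole = (\<lambda>i. - f pole i)" using assms(2)[of pole] S neg_pole by simp
  show ?thesis
  proof (cases "f pole = pole")
    case True
    then have "f x = id x" if "x \<in> topspace (nsphere 0)" for x
      using that S f_antipole neg_pole by (auto simp: topspace_nsphere)
    then show ?thesis by (simp add: Brouwer_degree2_eq[of 0 f id])
  next
    case False
    then have fp: "f pole = antipole" using f_pole S by auto
    have reflect: "(\<lambda>i. if i = 0 then - pole i else pole i) = antipole"
      "(\<lambda>i. if i = 0 then - antipole i else antipole i) = pole"
      by (auto simp: pole_def antipole_def fun_eq_iff)
    have "f x = (\<lambda>i. if i = 0 then - x i else x i)" if "x \<in> topspace (nsphere 0)" for x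
    proof -
      have "x = pole \<or> x = antipole" using that S by (auto simp: topspace_nsphere)
      then show ?thesis using reflect f_antipole neg_pole fp by auto
    qed
    then have "Brouwer_degree2 0 f = -1"
      using Brouwer_degree2_eq[of 0 f "\<lambda>x i. if i = 0 then - x i else x i"] Brouwer_degree2_reflection
      by simp
    then show ?thesis by simp
  qed
qed

lemma homotopic_with_normalized:
  fixes f g :: "'a::topological_space \<Rightarrow> 'b::euclidean_space"
  assumes "continuous_on S f" "continuous_on S g" and V: "subspace V"
    and fV: "\<And>x. x \<in> S \<Longrightarrow> f x \<in> V" and gV: "\<And>x. x \<in> S \<Longrightarrow> g x \<in> V"
    and nz: "\<And>x. x \<in> S \<Longrightarrow> 0 \<notin> closed_segment (f x) (g x)"
  shows "homotopic_with_canon (\<lambda>_. True) S (sphere 0 1 \<inter> V)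
           (\<lambda>x. f x /\<^sub>R norm (f x)) (\<lambda>x. g x /\<^sub>R norm (g x))"
proof -
  have "homotopic_with_canon (\<lambda>_. True) S (V - {0}) f g"
  proof (rule homotopic_with_linear[OF assms(1,2)])
    fix x assume x: "x \<in> S"
    have "closed_segment (f x) (g x) \<subseteq> V"
      by (rule closed_segment_subset) (use subspace_imp_convex[OF V] fV gV x in auto)
    then show "closed_segment (f x) (g x) \<subseteq> V - {0}" using nz x by auto
  qed
  moreover have "continuous_on (V - {0}) (\<lambda>y. y /\<^sub>R norm y)" by (intro continuous_intros) auto
  moreover have "(\<lambda>y. y /\<^sub>R norm y) \<in> (V - {0}) \<rightarrow> sphere 0 1 \<inter> V" using V by (auto simp: subspace_mul)
  ultimately have "homotopic_with_canon (\<lambda>_. True) S (sphere 0 1 \<inter> V)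
                     ((\<lambda>y. y /\<^sub>R norm y) \<circ> f) ((\<lambda>y. y /\<^sub>R norm y) \<circ> g)"
    by (intro homotopic_with_compose_continuous_left) auto
  then show ?thesis by (simp add: o_def)
qed

lemma norm_diff_scaleR_unit_sq:
  fixes y e :: "'a::real_inner"
  assumes "norm e = 1"
  shows "norm (y - s *\<^sub>R e) ^ 2 = norm y ^ 2 - 2 * s * (y \<bullet> e) + s ^ 2"
proof -
  have ee: "e \<bullet> e = 1" using assms by (simp add: dot_square_norm)
  have "norm (y - s *\<^sub>R e) ^ 2 = (y - s *\<^sub>R e) \<bullet> (y - s *\<^sub>R e)" by (rule power2_norm_eq_inner)
  also have "\<dots> = y \<bullet> y - 2 * s * (y \<bullet> e) + s ^ 2"
    using ee by (simp add: inner_diff_left inner_diff_right inner_commute power2_eq_square algebra_simps)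
  finally show ?thesis by (simp add: power2_norm_eq_inner)
qed

lemma inner_unit_sq_le_1:
  fixes y e :: "'a::real_inner"
  assumes "norm y = 1" "norm e = 1"
  shows "(y \<bullet> e) ^ 2 \<le> 1"
proof -
  have "\<bar>y \<bullet> e\<bar> \<le> 1" using Cauchy_Schwarz_ineq2[of y e] assms by simp
  then show ?thesis by (simp add: abs_le_square_iff[of _ 1, simplified] power_le_one)
qed

lemma unit_eq_scaleR_if_inner_sq_eq_1:
  fixes y e :: "'a::real_inner"
  assumes "norm y = 1" "norm e = 1" "(y \<bullet> e) ^ 2 = 1"
  shows "y = (y \<bullet> e) *\<^sub>R e"
proof -
  have "norm (y - (y \<bullet> e) *\<^sub>R e) ^ 2 = 0"
    using norm_diff_scaleR_unit_sq[OF assms(2), of y "y \<bullet> e"] assms by (simp add: power2_eq_square)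
  then show ?thesis by simp
qed

lemma inner_sq_eq_1_if_unit_eq_scaleR:
  fixes y e :: "'a::real_inner"
  assumes "norm y = 1" "norm e = 1" "y = s *\<^sub>R e"
  shows "(y \<bullet> e) ^ 2 = 1 \<and> s = y \<bullet> e"
proof -
  have "e \<bullet> e = 1" using assms(2) by (simp add: dot_square_norm)
  then have "y \<bullet> e = s" using assms(3) by simp
  moreover have "\<bar>s\<bar> = 1" using assms by simp
  ultimately show ?thesis by (simp add: power2_eq_1_iff abs_if split: if_splits)
qed

definition reflect_along :: "'a::real_inner \<Rightarrow> 'a \<Rightarrow> 'a" where
  "reflect_along u y = y - ((y \<bullet> u) * (2 / (u \<bullet> u))) *\<^sub>R u"

lemma reflect_along_minus: "reflect_along u (- y) = - reflect_along u y"
  by (simp add: reflect_along_def)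

lemma continuous_on_reflect_along: "continuous_on S (reflect_along u)"
  unfolding reflect_along_def by (intro continuous_intros)

lemma reflect_along_reflect_along [simp]: "reflect_along u (reflect_along u y) = y"
proof (cases "u = 0")
  case False
  then have "reflect_along u y \<bullet> u = - (y \<bullet> u)"
    by (simp add: reflect_along_def inner_diff_left)
  with False show ?thesis
    by (simp add: reflect_along_def[of u "reflect_along u y"]) (simp add: reflect_along_def)
qed (simp add: reflect_along_def)

lemma norm_reflect_along [simp]: "norm (reflect_along u y) = norm y"
proof (cases "u = 0")
  case False
  then have "reflect_along u y \<bullet> reflect_along u y = y \<bullet> y"
    by (simp add: reflect_along_def inner_diff_left inner_diff_right field_simps inner_commute)
  then show ?thesis by (simp add: norm_eq_sqrt_inner)
qed (simp add: reflect_along_def)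

lemma reflect_along_diff:
  assumes "norm p = norm e"
  shows "reflect_along (p - e) p = e"
proof (cases "p = e")
  case False
  have "p \<bullet> p = e \<bullet> e" using assms by (simp add: dot_square_norm)
  then have eq: "(p - e) \<bullet> (p - e) = 2 * (p \<bullet> (p - e))"
    by (simp add: inner_diff_left inner_diff_right inner_commute)
  moreover have "(p - e) \<bullet> (p - e) \<noteq> 0" using False by simp
  ultimately have "p \<bullet> (p - e) \<noteq> 0" by (metis mult_zero_right)
  with eq have c1: "(p \<bullet> (p - e)) * (2 / ((p - e) \<bullet> (p - e))) = 1" by simp
  show ?thesis unfolding reflect_along_def c1 by simp
qed (simp add: reflect_along_def)

lemma reflect_along_in_subspace: "subspace V \<Longrightarrow> u \<in> V \<Longrightarrow> y \<in> V \<Longrightarrow> reflect_along u y \<in> V"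
  unfolding reflect_along_def by (intro subspace_diff subspace_scale) auto

lemma odd_polynomial_approximation:
  fixes \<phi> :: "'a::euclidean_space \<Rightarrow> 'b::euclidean_space"
  assumes S: "compact S" "\<And>x. x \<in> S \<Longrightarrow> - x \<in> S" and cont: "continuous_on S \<phi>" and "0 < \<epsilon>"
    and V: "subspace V" "\<phi> ` S \<subseteq> V" and odd: "\<And>x. x \<in> S \<Longrightarrow> \<phi> (- x) = - \<phi> x"
  obtains g where "polynomial_function g" "g ` S \<subseteq> V" "\<And>x. g (- x) = - g x"
    "\<And>x. x \<in> S \<Longrightarrow> norm (\<phi> x - g x) < \<epsilon>"
proof -
  obtain g where pg: "polynomial_function g" and gV: "g ` S \<subseteq> V"
    and close: "\<And>x. x \<in> S \<Longrightarrow> norm (\<phi> x - g x) < \<epsilon>"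
    using Stone_Weierstrass_polynomial_function_subspace[OF S(1) cont \<open>0 < \<epsilon>\<close> V] by blast
  show thesis
  proof (rule that[of "\<lambda>x. (1/2) *\<^sub>R (g x - g (- x))"])
    have "polynomial_function (g \<circ> uminus)"
      by (intro polynomial_function_compose pg polynomial_function_minus polynomial_function_id)
    then show "polynomial_function (\<lambda>x. (1/2) *\<^sub>R (g x - g (- x)))"
      unfolding o_def using pg by (intro polynomial_function_cmul polynomial_function_diff) auto
    show "(\<lambda>x. (1/2) *\<^sub>R (g x - g (- x))) ` S \<subseteq> V"
      using gV S(2) by (auto intro!: subspace_scale[OF V(1)] subspace_diff[OF V(1)])
    show "(1/2) *\<^sub>R (g (- x) - g (- (- x))) = - ((1/2) *\<^sub>R (g x - g (- x)))" for x
      by (simp add: algebra_simps)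
    show "norm (\<phi> x - (1/2) *\<^sub>R (g x - g (- x))) < \<epsilon>" if x: "x \<in> S" for x
    proof -
      have "\<phi> x - (1/2) *\<^sub>R (g x - g (- x)) = (1/2) *\<^sub>R ((\<phi> x - g x) - (\<phi> (- x) - g (- x)))"
        using odd x by (simp add: algebra_simps) (simp flip: scaleR_add_left)
      also have "norm \<dots> \<le> (1/2) * (norm (\<phi> x - g x) + norm (\<phi> (- x) - g (- x)))"
        by (simp add: norm_triangle_ineq4)
      also have "\<dots> < \<epsilon>" using close[OF x] close[OF S(2)[OF x]] by simp
      finally show ?thesis .
    qed
  qed
qed

lemma odd_map_homotopic_differentiable:
  fixes \<phi> :: "'a::euclidean_space \<Rightarrow> 'a"
  assumes V: "subspace V" and cont: "continuous_on (sphere 0 1 \<inter> V) \<phi>"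
    and im: "\<phi> ` (sphere 0 1 \<inter> V) \<subseteq> sphere 0 1 \<inter> V"
    and odd: "\<And>x. x \<in> sphere 0 1 \<inter> V \<Longrightarrow> \<phi> (- x) = - \<phi> x"
  obtains \<rho> where "homotopic_with_canon (\<lambda>_. True) (sphere 0 1 \<inter> V) (sphere 0 1 \<inter> V) \<phi> \<rho>"
    and "\<rho> differentiable_on sphere 0 1 \<inter> V" and "\<And>x. \<rho> (- x) = - \<rho> x"
proof -
  have phinorm: "norm (\<phi> x) = 1" and phiV: "\<phi> x \<in> V" if "x \<in> sphere 0 1 \<inter> V" for x
    using im that by (auto simp: image_subset_iff)
  obtain g where pg: "polynomial_function g" and gV: "g ` (sphere 0 1 \<inter> V) \<subseteq> V"
    and odd_g: "\<And>x. g (- x) = - g x" and close: "\<And>x. x \<in> sphere 0 1 \<inter> V \<Longrightarrow> norm (\<phi> x - g x) < 1/2"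
  proof (rule odd_polynomial_approximation[OF _ _ cont _ V, where \<epsilon> = "1/2"])
    show "compact (sphere 0 1 \<inter> V)" using V by (intro compact_Int_closed compact_sphere closed_subspace)
    show "- x \<in> sphere 0 1 \<inter> V" if "x \<in> sphere 0 1 \<inter> V" for x using that V by (simp add: subspace_neg)
  qed (use im odd in auto)
  have g_nz: "g x \<noteq> 0" if "x \<in> sphere 0 1 \<inter> V" for x
    using close[OF that] phinorm[OF that] by auto
  have diffg: "g differentiable_on A" for A by (rule differentiable_on_polynomial_function[OF pg])
  show thesis
  proof (rule that[of "\<lambda>x. g x /\<^sub>R norm (g x)"])
    have "homotopic_with_canon (\<lambda>_. True) (sphere 0 1 \<inter> V) (sphere 0 1 \<inter> V)
        (\<lambda>x. \<phi> x /\<^sub>R norm (\<phi> x)) (\<lambda>x. g x /\<^sub>R norm (g x))"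
    proof (rule homotopic_with_normalized[OF cont _ V phiV])
      show "continuous_on (sphere 0 1 \<inter> V) g" using diffg differentiable_imp_continuous_on by blast
      show "g x \<in> V" if "x \<in> sphere 0 1 \<inter> V" for x using gV that by auto
      show "0 \<notin> closed_segment (\<phi> x) (g x)" if x: "x \<in> sphere 0 1 \<inter> V" for x
      proof
        assume "0 \<in> closed_segment (\<phi> x) (g x)"
        then have "norm (0 - \<phi> x) \<le> norm (g x - \<phi> x)" by (rule segment_bound)
        then show False using close[OF x] phinorm[OF x] by (simp add: norm_minus_commute)
      qed
    qed
    then show "homotopic_with_canon (\<lambda>_. True) (sphere 0 1 \<inter> V) (sphere 0 1 \<inter> V) \<phi> (\<lambda>x. g x /\<^sub>R norm (g x))"
      by (rule homotopic_with_eq) (use phinorm in auto)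
    show "(\<lambda>x. g x /\<^sub>R norm (g x)) differentiable_on sphere 0 1 \<inter> V"
      using g_nz by (fastforce intro: derivative_intros diffg differentiable_on_compose[OF diffg])
    show "g (- x) /\<^sub>R norm (g (- x)) = - (g x /\<^sub>R norm (g x))" for x by (simp add: odd_g)
  qed
qed

lemma differentiable_odd_map_misses_antipodes:
  fixes \<rho> :: "'a::euclidean_space \<Rightarrow> 'a"
  assumes "subspace W" "subspace V" "dim W < dim V" "W \<subseteq> V"
    and "\<rho> differentiable_on sphere 0 1 \<inter> W" and "\<rho> ` (sphere 0 1 \<inter> W) \<subseteq> sphere 0 1 \<inter> V"
    and odd: "\<And>x. \<rho> (- x) = - \<rho> x"
  obtains p where "p \<in> sphere 0 1 \<inter> V" "\<And>x. x \<in> sphere 0 1 \<inter> W \<Longrightarrow> \<rho> x \<noteq> p \<and> \<rho> x \<noteq> - p"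
proof -
  have "\<rho> ` (sphere 0 1 \<inter> W) \<noteq> sphere 0 1 \<inter> V"
    by (rule spheremap_lemma1) (use assms in auto)
  with assms(6) obtain p where p: "p \<in> sphere 0 1 \<inter> V" "p \<notin> \<rho> ` (sphere 0 1 \<inter> W)" by blast
  have "\<rho> x \<noteq> p \<and> \<rho> x \<noteq> - p" if "x \<in> sphere 0 1 \<inter> W" for x
  proof -
    have "- x \<in> sphere 0 1 \<inter> W" using that assms(1) by (simp add: subspace_neg)
    then show ?thesis using p(2) that odd[of x] by force
  qed
  with p(1) show thesis by (rule that)
qed

lemma homotopic_with_subtract_component:
  fixes y :: "'a::euclidean_space \<Rightarrow> 'a" and k :: "'a \<Rightarrow> real"
  assumes V: "subspace V" and e: "e \<in> sphere 0 1 \<inter> V"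
    and cy: "continuous_on (sphere 0 1 \<inter> V) y" and im: "y ` (sphere 0 1 \<inter> V) \<subseteq> sphere 0 1 \<inter> V"
    and ck: "continuous_on (sphere 0 1 \<inter> V) k"
    and k: "\<And>x. x \<in> sphere 0 1 \<inter> V \<Longrightarrow> k x \<noteq> 0 \<Longrightarrow> (y x \<bullet> e) ^ 2 < 1"
  shows "homotopic_with_canon (\<lambda>_. True) (sphere 0 1 \<inter> V) (sphere 0 1 \<inter> V) y
           (\<lambda>x. (y x - (k x * (y x \<bullet> e)) *\<^sub>R e) /\<^sub>R norm (y x - (k x * (y x \<bullet> e)) *\<^sub>R e))"
proof -
  define w where "w x = y x - (k x * (y x \<bullet> e)) *\<^sub>R e" for x
  have ynorm: "norm (y x) = 1" and yV: "y x \<in> V" if "x \<in> sphere 0 1 \<inter> V" for x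
    using im that by (auto simp: image_subset_iff)
  have "homotopic_with_canon (\<lambda>_. True) (sphere 0 1 \<inter> V) (sphere 0 1 \<inter> V)
      (\<lambda>x. y x /\<^sub>R norm (y x)) (\<lambda>x. w x /\<^sub>R norm (w x))"
  proof (rule homotopic_with_normalized[OF cy _ V yV])
    show "continuous_on (sphere 0 1 \<inter> V) w" unfolding w_def by (intro continuous_intros cy ck)
    show "w x \<in> V" if "x \<in> sphere 0 1 \<inter> V" for x
      unfolding w_def using yV[OF that] e by (intro subspace_diff[OF V] subspace_scale[OF V]) auto
    show "0 \<notin> closed_segment (y x) (w x)" if x: "x \<in> sphere 0 1 \<inter> V" for x
    proof
      assume "0 \<in> closed_segment (y x) (w x)"
      then obtain u where "(1 - u) *\<^sub>R y x + u *\<^sub>R w x = 0" by (auto simp: closed_segment_def)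
      then have "y x = (u * k x * (y x \<bullet> e)) *\<^sub>R e" by (simp add: w_def algebra_simps)
      from inner_sq_eq_1_if_unit_eq_scaleR[OF ynorm[OF x] _ this] e
      have "(y x \<bullet> e) ^ 2 = 1" "u * k x * (y x \<bullet> e) = y x \<bullet> e" by auto
      then have "k x \<noteq> 0" by auto
      with k[OF x] \<open>(y x \<bullet> e) ^ 2 = 1\<close> show False by simp
    qed
  qed
  then show ?thesis
    unfolding w_def by (rule homotopic_with_eq) (use ynorm in auto)
qed

lemma odd_map_homotopic_preserving_equator:
  fixes y :: "'a::euclidean_space \<Rightarrow> 'a"
  assumes V: "subspace V" and e: "e \<in> sphere 0 1 \<inter> V"
    and cy: "continuous_on (sphere 0 1 \<inter> V) y" and im: "y ` (sphere 0 1 \<inter> V) \<subseteq> sphere 0 1 \<inter> V"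
    and odd: "\<And>x. y (- x) = - y x"
    and avoid: "\<And>x. x \<in> sphere 0 1 \<inter> V \<Longrightarrow> x \<bullet> e = 0 \<Longrightarrow> y x \<noteq> e \<and> y x \<noteq> - e"
  obtains \<psi> where "homotopic_with_canon (\<lambda>_. True) (sphere 0 1 \<inter> V) (sphere 0 1 \<inter> V) y \<psi>"
    and "\<And>x. \<psi> (- x) = - \<psi> x"
    and "\<And>x. x \<in> sphere 0 1 \<inter> V \<Longrightarrow> x \<bullet> e = 0 \<Longrightarrow> \<psi> x \<bullet> e = 0"
proof -
  define t where "t x = y x \<bullet> e" for x
  \<comment> \<open>The weight is 1 on the equator and 0 where \<open>y x = \<plusminus>e\<close>.\<close>
  define c where "c x = (1 - (t x)^2) / (1 - (t x)^2 + (x \<bullet> e)^2)" for x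
  have enorm: "norm e = 1" using e by simp
  have t_le: "(t x)^2 \<le> 1" if "x \<in> sphere 0 1 \<inter> V" for x
    unfolding t_def using im that e by (intro inner_unit_sq_le_1) (auto simp: image_subset_iff)
  have t_lt: "(t x)^2 < 1" if "x \<in> sphere 0 1 \<inter> V" "x \<bullet> e = 0" for x
  proof (rule ccontr)
    assume "\<not> (t x)^2 < 1"
    then have "(t x)^2 = 1" using t_le[OF that(1)] by simp
    then have "y x = t x *\<^sub>R e" and "t x = 1 \<or> t x = -1"
      using unit_eq_scaleR_if_inner_sq_eq_1[OF _ enorm] im that(1)
      by (auto simp: t_def power2_eq_1_iff image_subset_iff)
    then show False using avoid[OF that] by auto
  qed
  have "0 < 1 - (t x)^2 + (x \<bullet> e)^2" if "x \<in> sphere 0 1 \<inter> V" for x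
    using t_le[OF that] t_lt[OF that] by (cases "x \<bullet> e = 0") (simp_all add: add_nonneg_pos)
  then have cont_c: "continuous_on (sphere 0 1 \<inter> V) c"
    unfolding c_def t_def by (intro continuous_intros cy) force
  define \<psi> where "\<psi> x = (y x - (c x * t x) *\<^sub>R e) /\<^sub>R norm (y x - (c x * t x) *\<^sub>R e)" for x
  have "homotopic_with_canon (\<lambda>_. True) (sphere 0 1 \<inter> V) (sphere 0 1 \<inter> V) y \<psi>"
    unfolding \<psi>_def t_def
  proof (rule homotopic_with_subtract_component[OF V e cy im cont_c])
    show "(y x \<bullet> e)^2 < 1" if "x \<in> sphere 0 1 \<inter> V" "c x \<noteq> 0" for x
      using t_le[OF that(1)] that(2) by (auto simp: c_def t_def)
  qed
  moreover have "\<psi> (- x) = - \<psi> x" for x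
  proof -
    have "t (- x) = - t x" "c (- x) = c x" by (simp_all add: c_def t_def odd)
    then have "y (- x) - (c (- x) * t (- x)) *\<^sub>R e = - (y x - (c x * t x) *\<^sub>R e)"
      by (simp add: odd)
    then show ?thesis unfolding \<psi>_def by (simp only: norm_minus_cancel scaleR_minus_right)
  qed
  moreover have "\<psi> x \<bullet> e = 0" if "x \<in> sphere 0 1 \<inter> V" "x \<bullet> e = 0" for x
  proof -
    have "c x = 1" using t_lt[OF that] that(2) by (simp add: c_def)
    then show ?thesis using enorm by (simp add: \<psi>_def t_def inner_diff_left dot_square_norm)
  qed
  ultimately show thesis using that by blast
qed

lemma odd_map_homotopic_avoiding_pole:
  fixes \<phi> :: "'a::euclidean_space \<Rightarrow> 'a"
  assumes W: "subspace W" and V: "subspace V" and "dim W < dim V" "W \<subseteq> V"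
    and e: "e \<in> sphere 0 1 \<inter> V" and cont: "continuous_on (sphere 0 1 \<inter> V) \<phi>"
    and im: "\<phi> ` (sphere 0 1 \<inter> V) \<subseteq> sphere 0 1 \<inter> V"
    and odd: "\<And>x. x \<in> sphere 0 1 \<inter> V \<Longrightarrow> \<phi> (- x) = - \<phi> x"
  obtains \<rho> R where "homotopic_with_canon (\<lambda>_. True) (sphere 0 1 \<inter> V) (sphere 0 1 \<inter> V) \<phi> \<rho>"
    "\<And>x. \<rho> (- x) = - \<rho> x" "continuous_on (sphere 0 1 \<inter> V) R"
    "R ` (sphere 0 1 \<inter> V) \<subseteq> sphere 0 1 \<inter> V" "\<And>y. R (- y) = - R y"
    "\<And>x. x \<in> sphere 0 1 \<inter> W \<Longrightarrow> R (\<rho> x) \<noteq> e \<and> R (\<rho> x) \<noteq> - e"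
proof -
  obtain \<rho> where hom: "homotopic_with_canon (\<lambda>_. True) (sphere 0 1 \<inter> V) (sphere 0 1 \<inter> V) \<phi> \<rho>"
    and diff: "\<rho> differentiable_on sphere 0 1 \<inter> V" and odd_\<rho>: "\<And>x. \<rho> (- x) = - \<rho> x"
    using odd_map_homotopic_differentiable[OF V cont im odd] by blast
  have WV: "sphere 0 1 \<inter> W \<subseteq> sphere 0 1 \<inter> V" using \<open>W \<subseteq> V\<close> by blast
  obtain p where p: "p \<in> sphere 0 1 \<inter> V" and avoid: "\<And>x. x \<in> sphere 0 1 \<inter> W \<Longrightarrow> \<rho> x \<noteq> p \<and> \<rho> x \<noteq> - p"
  proof (rule differentiable_odd_map_misses_antipodes[OF W V assms(3,4), of \<rho>])
    show "\<rho> differentiable_on sphere 0 1 \<inter> W" by (rule differentiable_on_subset[OF diff WV])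
    show "\<rho> ` (sphere 0 1 \<inter> W) \<subseteq> sphere 0 1 \<inter> V"
      using homotopic_with_imp_subset2[OF hom] WV by blast
  qed (use odd_\<rho> in auto)
  \<comment> \<open>The reflection swapping \<open>p\<close> and \<open>e\<close> turns the avoidance of \<open>\<plusminus>p\<close> into that of \<open>\<plusminus>e\<close>.\<close>
  define R where "R = reflect_along (p - e)"
  have RR: "R (R y) = y" for y by (simp add: R_def)
  have R_odd: "R (- y) = - R y" for y by (simp add: R_def reflect_along_minus)
  have "R p = e" using p e by (simp add: R_def reflect_along_diff)
  then have "R e = p" using RR[of p] by simp
  have RS: "R ` (sphere 0 1 \<inter> V) \<subseteq> sphere 0 1 \<inter> V"
    using p e V by (auto simp: R_def reflect_along_in_subspace subspace_diff)
  have "R (\<rho> x) \<noteq> e \<and> R (\<rho> x) \<noteq> - e" if "x \<in> sphere 0 1 \<inter> W" for x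
    using avoid[OF that] RR[of "\<rho> x"] RR[of "- \<rho> x"] R_odd[of "\<rho> x"] \<open>R e = p\<close> by auto
  with hom odd_\<rho> RS R_odd show thesis
    by (intro that[of \<rho> R]) (simp_all add: R_def continuous_on_reflect_along)
qed

text \<open>An enumeration \<open>b\<close> of the basis identifies \<open>nsphere k\<close> (in the coordinates
  \<open>0, \<dots>, k\<close>) with the unit sphere \<open>coord_sphere k\<close> of the span of \<open>b 0, \<dots>, b k\<close>;
  \<open>transfer\<close> carries self-maps of the latter to self-maps of the former.\<close>

locale basis_enumeration =
  fixes b :: "nat \<Rightarrow> 'c::euclidean_space"
  assumes bij_betw_basis: "bij_betw b {..<DIM('c)} Basis"
begin

lemma inj_on_basis: "inj_on b {..<DIM('c)}" and image_basis: "b ` {..<DIM('c)} = Basis"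
  using bij_betw_basis by (auto simp: bij_betw_def)

lemma basis_in_Basis: "i < DIM('c) \<Longrightarrow> b i \<in> Basis"
  using image_basis by blast

lemma inner_basis: "i < DIM('c) \<Longrightarrow> j < DIM('c) \<Longrightarrow> b i \<bullet> b j = (if i = j then 1 else 0)"
  using basis_in_Basis inner_Basis inj_on_basis by (metis inj_onD lessThan_iff)

lemma sum_basis_expansion: "(\<Sum>i<DIM('c). (y \<bullet> b i) *\<^sub>R b i) = y"
proof -
  have "(\<Sum>i<DIM('c). (y \<bullet> b i) *\<^sub>R b i) = (\<Sum>v\<in>b ` {..<DIM('c)}. (y \<bullet> v) *\<^sub>R v)"
    by (simp add: sum.reindex[OF inj_on_basis])
  also have "\<dots> = y" by (simp add: image_basis euclidean_representation)
  finally show ?thesis .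
qed

lemma norm_sq_basis: "norm y ^ 2 = (\<Sum>i<DIM('c). (y \<bullet> b i) ^ 2)"
proof -
  have "norm y ^ 2 = (\<Sum>i<DIM('c). (y \<bullet> b i) *\<^sub>R b i) \<bullet> y"
    by (simp add: sum_basis_expansion power2_norm_eq_inner)
  also have "\<dots> = (\<Sum>i<DIM('c). (y \<bullet> b i) ^ 2)"
    by (simp add: inner_sum_left inner_sum_right power2_eq_square inner_commute)
  finally show ?thesis .
qed

definition embed :: "(nat \<Rightarrow> real) \<Rightarrow> 'c" where
  "embed x = (\<Sum>i<DIM('c). x i *\<^sub>R b i)"

definition coords :: "'c \<Rightarrow> nat \<Rightarrow> real" where
  "coords y = (\<lambda>i. if i < DIM('c) then y \<bullet> b i else 0)"

definition coord_span :: "nat \<Rightarrow> 'c set" where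
  "coord_span k = span (b ` {..<k})"

definition coord_sphere :: "nat \<Rightarrow> 'c set" where
  "coord_sphere k = sphere 0 1 \<inter> coord_span (Suc k)"

definition transfer :: "('c \<Rightarrow> 'c) \<Rightarrow> (nat \<Rightarrow> real) \<Rightarrow> nat \<Rightarrow> real" where
  "transfer \<phi> = coords \<circ> \<phi> \<circ> embed"

lemma inner_embed_basis: "i < DIM('c) \<Longrightarrow> embed x \<bullet> b i = x i"
proof -
  assume i: "i < DIM('c)"
  have "embed x \<bullet> b i = (\<Sum>j<DIM('c). x j * (if j = i then 1 else 0))"
    unfolding embed_def by (simp add: inner_sum_left inner_basis i)
  also have "\<dots> = x i" using i by (simp add: if_distrib cong: if_cong)
  finally show ?thesis .
qed

lemma embed_coords [simp]: "embed (coords y) = y"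
  unfolding embed_def coords_def using sum_basis_expansion by simp

lemma embed_uminus: "embed (\<lambda>i. - x i) = - embed x"
  by (simp add: embed_def sum_negf)

lemma coords_uminus: "coords (- y) = (\<lambda>i. - coords y i)"
  by (simp add: coords_def fun_eq_iff)

lemma continuous_on_embed: "continuous_on A embed"
  unfolding embed_def
  by (intro continuous_intros continuous_on_subset[OF continuous_on_product_coordinates]) auto

lemma continuous_on_coords: "continuous_on A coords"
  unfolding coords_def
proof (rule continuous_on_coordinatewise_then_product)
  show "continuous_on A (\<lambda>y. if i < DIM('c) then y \<bullet> b i else 0)" for i
    by (cases "i < DIM('c)") (auto intro!: continuous_intros)
qed

lemma subspace_coord_span: "subspace (coord_span k)"
  by (simp add: coord_span_def)

lemma coord_span_mono: "i \<le> j \<Longrightarrow> coord_span i \<subseteq> coord_span j"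
  unfolding coord_span_def by (intro span_mono) auto

lemma dim_coord_span: "j \<le> DIM('c) \<Longrightarrow> dim (coord_span j) = j"
proof -
  assume j: "j \<le> DIM('c)"
  have "b ` {..<j} \<subseteq> Basis" using basis_in_Basis j by auto
  then have "independent (b ` {..<j})" by (rule independent_mono[OF independent_Basis])
  moreover have "inj_on b {..<j}" using inj_on_basis j by (auto intro: inj_on_subset)
  then have "card (b ` {..<j}) = j" by (simp add: card_image)
  ultimately show ?thesis unfolding coord_span_def by (simp add: dim_span dim_eq_card_independent)
qed

lemma mem_coord_span_iff:
  assumes "k \<le> DIM('c)"
  shows "y \<in> coord_span k \<longleftrightarrow> (\<forall>i. k \<le> i \<and> i < DIM('c) \<longrightarrow> y \<bullet> b i = 0)"
proof
  assume y: "y \<in> coord_span k"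
  show "\<forall>i. k \<le> i \<and> i < DIM('c) \<longrightarrow> y \<bullet> b i = 0"
  proof (intro allI impI)
    fix i assume i: "k \<le> i \<and> i < DIM('c)"
    have "b ` {..<k} \<subseteq> {v. v \<bullet> b i = 0}"
      using i assms by (auto simp: inner_basis)
    moreover have "subspace {v. v \<bullet> b i = 0}"
      by (auto simp: subspace_def inner_add_left)
    ultimately have "coord_span k \<subseteq> {v. v \<bullet> b i = 0}"
      unfolding coord_span_def by (rule span_minimal)
    then show "y \<bullet> b i = 0" using y by auto
  qed
next
  assume z: "\<forall>i. k \<le> i \<and> i < DIM('c) \<longrightarrow> y \<bullet> b i = 0"
  have "y = (\<Sum>i<DIM('c). (y \<bullet> b i) *\<^sub>R b i)" by (simp add: sum_basis_expansion)
  also have "\<dots> = (\<Sum>i<k. (y \<bullet> b i) *\<^sub>R b i)"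
    by (rule sum.mono_neutral_right) (use assms z in auto)
  also have "\<dots> \<in> coord_span k"
    unfolding coord_span_def by (intro span_sum span_mul span_base) auto
  finally show "y \<in> coord_span k" .
qed

lemma basis_in_coord_sphere: "k < DIM('c) \<Longrightarrow> b k \<in> coord_sphere k"
  unfolding coord_sphere_def coord_span_def using basis_in_Basis by (auto intro: span_base)

lemma coord_sphere_mono: "coord_sphere k \<subseteq> coord_sphere (Suc k)"
  unfolding coord_sphere_def using coord_span_mono[of "Suc k" "Suc (Suc k)"] by auto

lemma inner_basis_coord_sphere:
  "Suc k < DIM('c) \<Longrightarrow> y \<in> coord_sphere k \<Longrightarrow> y \<bullet> b (Suc k) = 0"
  unfolding coord_sphere_def using mem_coord_span_iff[of "Suc k" y] by auto

lemma coord_sphere_equator: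
  assumes "Suc k < DIM('c)" "y \<in> coord_sphere (Suc k)" "y \<bullet> b (Suc k) = 0"
  shows "y \<in> coord_sphere k"
proof -
  have "\<forall>i. Suc (Suc k) \<le> i \<and> i < DIM('c) \<longrightarrow> y \<bullet> b i = 0"
    using assms mem_coord_span_iff[of "Suc (Suc k)" y] by (auto simp: coord_sphere_def)
  then have "\<forall>i. Suc k \<le> i \<and> i < DIM('c) \<longrightarrow> y \<bullet> b i = 0"
    using assms(3) by (metis le_antisym not_less_eq_eq)
  then show ?thesis using assms mem_coord_span_iff[of "Suc k" y] by (auto simp: coord_sphere_def)
qed

lemma embed_in_coord_sphere:
  assumes k: "k < DIM('c)" and x: "x \<in> nsphere_carrier k"
  shows "embed x \<in> coord_sphere k"
proof -
  have "norm (embed x) ^ 2 = (\<Sum>i<DIM('c). (x i) ^ 2)"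
    by (simp add: norm_sq_basis inner_embed_basis)
  also have "\<dots> = (\<Sum>i\<le>k. (x i) ^ 2)"
    by (rule sum.mono_neutral_right) (use k x in \<open>auto simp: nsphere_carrier_def\<close>)
  also have "\<dots> = 1" using x by (simp add: nsphere_carrier_def)
  finally have "norm (embed x) = 1"
    using norm_ge_zero[of "embed x"] by (auto simp: power2_eq_1_iff)
  moreover have "embed x \<in> coord_span (Suc k)"
    using k x by (subst mem_coord_span_iff) (auto simp: inner_embed_basis nsphere_carrier_def)
  ultimately show ?thesis by (simp add: coord_sphere_def)
qed

lemma coords_in_nsphere_carrier:
  assumes k: "k < DIM('c)" and y: "y \<in> coord_sphere k"
  shows "coords y \<in> nsphere_carrier k"
proof -
  have z: "y \<bullet> b i = 0" if "k < i" "i < DIM('c)" for i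
    using that y k mem_coord_span_iff[of "Suc k" y] by (auto simp: coord_sphere_def)
  have "(\<Sum>i\<le>k. coords y i ^ 2) = (\<Sum>i<DIM('c). (y \<bullet> b i) ^ 2)"
    by (rule sum.mono_neutral_cong_left) (use k z in \<open>auto simp: coords_def\<close>)
  also have "\<dots> = 1" using y by (simp add: coord_sphere_def flip: norm_sq_basis)
  finally show ?thesis using z by (auto simp: nsphere_carrier_def coords_def)
qed

lemma coords_embed: "k < DIM('c) \<Longrightarrow> x \<in> nsphere_carrier k \<Longrightarrow> coords (embed x) = x"
  by (auto simp: coords_def fun_eq_iff inner_embed_basis nsphere_carrier_def)

lemma continuous_map_transfer:
  assumes "k < DIM('c)" "continuous_on (coord_sphere k) \<phi>" "\<phi> ` coord_sphere k \<subseteq> coord_sphere k"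
  shows "continuous_map (nsphere k) (nsphere k) (transfer \<phi>)"
proof -
  have "continuous_on (nsphere_carrier k) (\<phi> \<circ> embed)"
    by (rule continuous_on_compose[OF continuous_on_embed continuous_on_subset[OF assms(2)]])
      (use embed_in_coord_sphere assms in auto)
  then have "continuous_on (nsphere_carrier k) (transfer \<phi>)"
    unfolding transfer_def o_assoc[symmetric] by (rule continuous_on_compose[OF _ continuous_on_coords])
  moreover have "transfer \<phi> ` nsphere_carrier k \<subseteq> nsphere_carrier k"
    using assms embed_in_coord_sphere coords_in_nsphere_carrier by (fastforce simp: transfer_def)
  ultimately show ?thesis
    by (auto simp: nsphere_eq_top_of_set continuous_map_subtopology_eu)
qed

lemma Brouwer_degree2_transfer_homotopic:
  assumes k: "k < DIM('c)"
    and "homotopic_with_canon (\<lambda>_. True) (coord_sphere k) (coord_sphere k) \<phi> \<psi>"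
  shows "Brouwer_degree2 k (transfer \<phi>) = Brouwer_degree2 k (transfer \<psi>)"
proof (rule Brouwer_degree2_homotopic)
  have "continuous_map (nsphere k) (top_of_set (coord_sphere k)) embed"
    using k by (auto simp: nsphere_eq_top_of_set continuous_map_subtopology_eu
        continuous_on_embed embed_in_coord_sphere)
  then have "homotopic_with (\<lambda>_. True) (nsphere k) (top_of_set (coord_sphere k)) (\<phi> \<circ> embed) (\<psi> \<circ> embed)"
    by (rule homotopic_with_compose_continuous_map_right[OF assms(2)]) auto
  moreover have "continuous_map (top_of_set (coord_sphere k)) (nsphere k) coords"
    using k by (auto simp: nsphere_eq_top_of_set continuous_map_subtopology_eu
        continuous_on_coords coords_in_nsphere_carrier)
  ultimately have "homotopic_with (\<lambda>_. True) (nsphere k) (nsphere k) (coords \<circ> (\<phi> \<circ> embed)) (coords \<circ> (\<psi> \<circ> embed))"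
    by (rule homotopic_with_compose_continuous_map_left) auto
  then show "homotopic_with (\<lambda>_. True) (nsphere k) (nsphere k) (transfer \<phi>) (transfer \<psi>)"
    by (simp add: transfer_def o_assoc)
qed

lemma transfer_uminus:
  assumes "k < DIM('c)" "\<And>y. y \<in> coord_sphere k \<Longrightarrow> \<phi> (- y) = - \<phi> y" "u \<in> nsphere_carrier k"
  shows "transfer \<phi> (\<lambda>i. - u i) = (\<lambda>i. - transfer \<phi> u i)"
  using assms embed_in_coord_sphere by (simp add: transfer_def embed_uminus coords_uminus)

lemma transfer_comp: "transfer (\<psi> \<circ> \<phi>) = transfer \<psi> \<circ> transfer \<phi>"
  by (simp add: transfer_def fun_eq_iff)

end

context basis_enumeration
begin

lemma odd_map_deformation:
  assumes m: "Suc m < DIM('c)" and cont: "continuous_on (coord_sphere (Suc m)) \<phi>"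
    and im: "\<phi> ` coord_sphere (Suc m) \<subseteq> coord_sphere (Suc m)"
    and odd: "\<And>y. y \<in> coord_sphere (Suc m) \<Longrightarrow> \<phi> (- y) = - \<phi> y"
  obtains \<rho> R \<psi> where
    "homotopic_with_canon (\<lambda>_. True) (coord_sphere (Suc m)) (coord_sphere (Suc m)) \<phi> \<rho>"
    "continuous_on (coord_sphere (Suc m)) R" "R ` coord_sphere (Suc m) \<subseteq> coord_sphere (Suc m)"
    "homotopic_with_canon (\<lambda>_. True) (coord_sphere (Suc m)) (coord_sphere (Suc m)) (R \<circ> \<rho>) \<psi>"
    "\<psi> ` coord_sphere m \<subseteq> coord_sphere m" "\<And>y. \<psi> (- y) = - \<psi> y"
proof -
  define V where "V = coord_span (Suc (Suc m))"
  define e where "e = b (Suc m)"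
  have V: "subspace V" by (simp add: V_def subspace_coord_span)
  have SV: "coord_sphere (Suc m) = sphere 0 1 \<inter> V" by (simp add: V_def coord_sphere_def)
  have e: "e \<in> sphere 0 1 \<inter> V" using basis_in_coord_sphere[OF m] by (simp add: e_def SV)
  have equator: "x \<in> coord_sphere m \<longleftrightarrow> x \<in> sphere 0 1 \<inter> V \<and> x \<bullet> e = 0" for x
    using coord_sphere_equator[OF m, of x] inner_basis_coord_sphere[OF m, of x] coord_sphere_mono[of m]
    by (auto simp: SV e_def)
  have dim: "dim (coord_span (Suc m)) < dim V" using m by (simp add: V_def dim_coord_span)
  have sub: "coord_span (Suc m) \<subseteq> V" by (simp add: V_def coord_span_mono)
  have cont': "continuous_on (sphere 0 1 \<inter> V) \<phi>" and im': "\<phi> ` (sphere 0 1 \<inter> V) \<subseteq> sphere 0 1 \<inter> V"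
    and odd': "\<And>x. x \<in> sphere 0 1 \<inter> V \<Longrightarrow> \<phi> (- x) = - \<phi> x"
    using cont im odd by (simp_all only: SV)
  obtain \<rho> R where hom_\<rho>: "homotopic_with_canon (\<lambda>_. True) (sphere 0 1 \<inter> V) (sphere 0 1 \<inter> V) \<phi> \<rho>"
    and odd_\<rho>: "\<And>x. \<rho> (- x) = - \<rho> x" and cont_R: "continuous_on (sphere 0 1 \<inter> V) R"
    and RS: "R ` (sphere 0 1 \<inter> V) \<subseteq> sphere 0 1 \<inter> V"
    and R_odd: "\<And>y. R (- y) = - R y"
    and avoid: "\<And>x. x \<in> sphere 0 1 \<inter> coord_span (Suc m) \<Longrightarrow> R (\<rho> x) \<noteq> e \<and> R (\<rho> x) \<noteq> - e"
    using odd_map_homotopic_avoiding_pole[OF subspace_coord_span V dim sub e cont' im' odd'] by blast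
  have \<rho>S: "\<rho> ` (sphere 0 1 \<inter> V) \<subseteq> sphere 0 1 \<inter> V" by (rule homotopic_with_imp_subset2[OF hom_\<rho>])
  obtain \<psi> where hom_\<psi>: "homotopic_with_canon (\<lambda>_. True) (sphere 0 1 \<inter> V) (sphere 0 1 \<inter> V) (R \<circ> \<rho>) \<psi>"
    and odd_\<psi>: "\<And>x. \<psi> (- x) = - \<psi> x"
    and equator_\<psi>: "\<And>x. x \<in> sphere 0 1 \<inter> V \<Longrightarrow> x \<bullet> e = 0 \<Longrightarrow> \<psi> x \<bullet> e = 0"
  proof (rule odd_map_homotopic_preserving_equator[OF V e])
    show "continuous_on (sphere 0 1 \<inter> V) (R \<circ> \<rho>)"
      using homotopic_with_imp_continuous[OF hom_\<rho>] continuous_on_compose[OF _ continuous_on_subset[OF cont_R \<rho>S]]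
      by blast
    show "(R \<circ> \<rho>) ` (sphere 0 1 \<inter> V) \<subseteq> sphere 0 1 \<inter> V"
      using image_mono[OF \<rho>S, of R] RS by (simp only: image_comp[symmetric])
    show "(R \<circ> \<rho>) (- x) = - (R \<circ> \<rho>) x" for x by (simp add: odd_\<rho> R_odd)
    show "(R \<circ> \<rho>) x \<noteq> e \<and> (R \<circ> \<rho>) x \<noteq> - e" if "x \<in> sphere 0 1 \<inter> V" "x \<bullet> e = 0" for x
      using avoid[of x] equator[of x] that by (simp add: coord_sphere_def)
  qed blast
  have "\<psi> ` coord_sphere m \<subseteq> coord_sphere m"
    using homotopic_with_imp_subset2[OF hom_\<psi>] equator_\<psi> equator by blast
  with hom_\<rho> hom_\<psi> cont_R RS odd_\<psi> show thesis
    by (intro that[of \<rho> R \<psi>]) (simp_all only: SV)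
qed

lemma even_Brouwer_degree2_transfer_diff:
  assumes k: "Suc m < DIM('c)" and cont: "continuous_on (coord_sphere (Suc m)) \<psi>"
    and im: "\<psi> ` coord_sphere (Suc m) \<subseteq> coord_sphere (Suc m)"
    and equator: "\<psi> ` coord_sphere m \<subseteq> coord_sphere m"
    and odd: "\<And>y. y \<in> coord_sphere (Suc m) \<Longrightarrow> \<psi> (- y) = - \<psi> y"
  shows "even (Brouwer_degree2 (Suc m) (transfer \<psi>) - Brouwer_degree2 m (transfer \<psi>))"
proof -
  have m: "m < DIM('c)" using k by simp
  have "even (Brouwer_degree2 (Suc m) (transfer \<psi>) - Brouwer_degree2 (Suc m - Suc 0) (transfer \<psi>))"
  proof (rule Borsuk_odd_mapping_degree_step[OF continuous_map_transfer[OF k cont im]])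
    show "transfer \<psi> \<in> topspace (nsphere (Suc m - Suc 0)) \<rightarrow> topspace (nsphere (Suc m - Suc 0))"
      using embed_in_coord_sphere[OF m] equator coords_in_nsphere_carrier[OF m]
      by (auto simp: topspace_nsphere transfer_def image_subset_iff)
  qed (use transfer_uminus[OF k, of \<psi>] odd in \<open>simp add: topspace_nsphere\<close>)
  then show ?thesis by simp
qed

lemma nsphere_map_as_transfer:
  assumes k: "k < DIM('c)" and f: "continuous_map (nsphere k) (nsphere k) f"
  shows "continuous_on (coord_sphere k) (embed \<circ> f \<circ> coords)"
    and "(embed \<circ> f \<circ> coords) ` coord_sphere k \<subseteq> coord_sphere k"
    and "Brouwer_degree2 k (transfer (embed \<circ> f \<circ> coords)) = Brouwer_degree2 k f"
proof -
  have fcont: "continuous_on (nsphere_carrier k) f"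
    and fim: "f ` nsphere_carrier k \<subseteq> nsphere_carrier k"
    using f by (auto simp: nsphere_eq_top_of_set continuous_map_subtopology_eu)
  have "continuous_on (coord_sphere k) (f \<circ> coords)"
    by (rule continuous_on_compose[OF continuous_on_coords continuous_on_subset[OF fcont]])
      (use coords_in_nsphere_carrier[OF k] in auto)
  then show "continuous_on (coord_sphere k) (embed \<circ> f \<circ> coords)"
    unfolding o_assoc[symmetric] by (rule continuous_on_compose[OF _ continuous_on_embed])
  show "(embed \<circ> f \<circ> coords) ` coord_sphere k \<subseteq> coord_sphere k"
    using coords_in_nsphere_carrier[OF k] fim embed_in_coord_sphere[OF k] by auto
  show "Brouwer_degree2 k (transfer (embed \<circ> f \<circ> coords)) = Brouwer_degree2 k f"
    using fim by (intro Brouwer_degree2_eq) (auto simp: topspace_nsphere transfer_def coords_embed[OF k])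
qed

lemma odd_Brouwer_degree2:
  assumes "k < DIM('c)" and "continuous_map (nsphere k) (nsphere k) f"
    and "\<And>u. u \<in> nsphere_carrier k \<Longrightarrow> f (\<lambda>i. - u i) = (\<lambda>i. - f u i)"
  shows "odd (Brouwer_degree2 k f)"
  using assms
proof (induction k arbitrary: f)
  case 0
  then show ?case using odd_Brouwer_degree2_0 by blast
next
  case (Suc m)
  have k: "Suc m < DIM('c)" and m: "m < DIM('c)" using Suc.prems(1) by auto
  define \<phi> where "\<phi> = embed \<circ> f \<circ> coords"
  note \<phi> = nsphere_map_as_transfer[OF k Suc.prems(2), folded \<phi>_def]
  have odd_\<phi>: "\<phi> (- y) = - \<phi> y" if "y \<in> coord_sphere (Suc m)" for y
    using Suc.prems(3)[OF coords_in_nsphere_carrier[OF k that]] by (simp add: \<phi>_def coords_uminus embed_uminus)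
  obtain \<rho> R \<psi> where hom_\<rho>: "homotopic_with_canon (\<lambda>_. True) (coord_sphere (Suc m)) (coord_sphere (Suc m)) \<phi> \<rho>"
    and cont_R: "continuous_on (coord_sphere (Suc m)) R"
    and R: "R ` coord_sphere (Suc m) \<subseteq> coord_sphere (Suc m)"
    and hom_\<psi>: "homotopic_with_canon (\<lambda>_. True) (coord_sphere (Suc m)) (coord_sphere (Suc m)) (R \<circ> \<rho>) \<psi>"
    and equator_\<psi>: "\<psi> ` coord_sphere m \<subseteq> coord_sphere m" and odd_\<psi>: "\<And>y. \<psi> (- y) = - \<psi> y"
    using odd_map_deformation[OF k \<phi>(1,2) odd_\<phi>] by blast
  have cont_\<psi>: "continuous_on (coord_sphere (Suc m)) \<psi>" and im_\<psi>: "\<psi> ` coord_sphere (Suc m) \<subseteq> coord_sphere (Suc m)"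
    using homotopic_with_imp_continuous[OF hom_\<psi>] homotopic_with_imp_subset2[OF hom_\<psi>] by auto
  have "odd (Brouwer_degree2 m (transfer \<psi>))"
  proof (rule Suc.IH[OF m continuous_map_transfer[OF m _ equator_\<psi>]])
    show "continuous_on (coord_sphere m) \<psi>" using continuous_on_subset[OF cont_\<psi> coord_sphere_mono] .
  qed (simp add: transfer_def embed_uminus coords_uminus odd_\<psi>)
  with even_Brouwer_degree2_transfer_diff[OF k cont_\<psi> im_\<psi> equator_\<psi>] odd_\<psi>
  have "odd (Brouwer_degree2 (Suc m) (transfer \<psi>))" by fastforce
  moreover have TR: "continuous_map (nsphere (Suc m)) (nsphere (Suc m)) (transfer R)"
    by (rule continuous_map_transfer[OF k cont_R R])
  moreover have "continuous_map (nsphere (Suc m)) (nsphere (Suc m)) (transfer \<rho>)"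
    using homotopic_with_imp_continuous[OF hom_\<rho>] homotopic_with_imp_subset2[OF hom_\<rho>]
    by (intro continuous_map_transfer[OF k]) auto
  ultimately have "odd (Brouwer_degree2 (Suc m) (transfer R) * Brouwer_degree2 (Suc m) (transfer \<rho>))"
    using Brouwer_degree2_transfer_homotopic[OF k hom_\<psi>] Brouwer_degree2_compose
    by (simp add: transfer_comp)
  then show ?case
    using Brouwer_degree2_transfer_homotopic[OF k hom_\<rho>] \<phi>(3) by simp
qed

lemma no_odd_map_to_equator:
  assumes k: "Suc m < DIM('c)" and cont: "continuous_on (coord_sphere (Suc m)) G"
    and im: "G ` coord_sphere (Suc m) \<subseteq> coord_sphere m"
    and odd: "\<And>y. y \<in> coord_sphere (Suc m) \<Longrightarrow> G (- y) = - G y"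
  shows False
proof -
  have m: "m < DIM('c)" using k by simp
  have im': "G ` coord_sphere (Suc m) \<subseteq> coord_sphere (Suc m)" using im coord_sphere_mono by blast
  have equator: "G ` coord_sphere m \<subseteq> coord_sphere m" using im coord_sphere_mono[of m] by blast
  have "odd (Brouwer_degree2 m (transfer G))"
  proof (rule odd_Brouwer_degree2[OF m continuous_map_transfer[OF m _ equator]])
    show "continuous_on (coord_sphere m) G" using continuous_on_subset[OF cont coord_sphere_mono] .
    show "transfer G (\<lambda>i. - u i) = (\<lambda>i. - transfer G u i)" if "u \<in> nsphere_carrier m" for u
      using transfer_uminus[OF m, of G u] odd coord_sphere_mono[of m] that by auto
  qed
  with even_Brouwer_degree2_transfer_diff[OF k cont im' equator odd]
  have "Brouwer_degree2 (Suc m) (transfer G) \<noteq> 0" by fastforce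
  moreover have "Brouwer_degree2 (Suc m) (transfer G) = 0"
  proof (rule Brouwer_degree2_nonsurjective[OF continuous_map_transfer[OF k cont im']])
    \<comment> \<open>\<open>transfer G\<close> lands in the equator, so it misses the pole \<open>coords (b (Suc m))\<close>.\<close>
    show "transfer G ` topspace (nsphere (Suc m)) \<noteq> topspace (nsphere (Suc m))"
    proof
      assume eq: "transfer G ` topspace (nsphere (Suc m)) = topspace (nsphere (Suc m))"
      have "coords (b (Suc m)) \<in> nsphere_carrier (Suc m)"
        by (rule coords_in_nsphere_carrier[OF k basis_in_coord_sphere[OF k]])
      then obtain x where x: "x \<in> nsphere_carrier (Suc m)" "transfer G x = coords (b (Suc m))"
        using eq by (metis imageE topspace_nsphere)
      have "G (embed x) \<bullet> b (Suc m) = 0"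
        using im embed_in_coord_sphere[OF k x(1)] inner_basis_coord_sphere[OF k] by auto
      moreover have "transfer G x (Suc m) = G (embed x) \<bullet> b (Suc m)" using k by (simp add: transfer_def coords_def)
      moreover have "coords (b (Suc m)) (Suc m) = 1" using k by (simp add: coords_def inner_basis)
      ultimately show False using x(2) by simp
    qed
  qed
  ultimately show False by simp
qed
end

lemma basis_enumeration_prod:
  fixes e :: "nat \<Rightarrow> 'e::euclidean_space"
  assumes e: "bij_betw e {..<DIM('e)} Basis"
  shows "basis_enumeration (\<lambda>i. if i < DIM('e) then (e i, 0::real) else (0, 1))"
proof
  let ?b = "\<lambda>i. if i < DIM('e) then (e i, 0::real) else (0, 1)"
  have ei: "inj_on e {..<DIM('e)}" and ee: "e ` {..<DIM('e)} = Basis"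
    using e by (auto simp: bij_betw_def)
  have "inj_on ?b {..<DIM('e \<times> real)}"
  proof (rule inj_onI)
    fix i j assume "i \<in> {..<DIM('e \<times> real)}" "j \<in> {..<DIM('e \<times> real)}" "?b i = ?b j"
    then show "i = j" using ei by (auto split: if_splits dest: inj_onD)
  qed
  moreover have "{..<DIM('e \<times> real)} = {..<DIM('e)} \<union> {DIM('e)}" by auto
  then have "?b ` {..<DIM('e \<times> real)} = (\<lambda>u. (u, 0)) ` Basis \<union> {(0, 1)}"
    using ee by (auto simp: image_image[symmetric])
  ultimately show "bij_betw ?b {..<DIM('e \<times> real)} Basis" by (simp add: bij_betw_def Basis_prod_def)
qed

theorem Borsuk_Ulam:
  fixes F :: "'e::euclidean_space \<times> real \<Rightarrow> 'e"
  assumes cont: "continuous_on (sphere 0 1) F" and odd: "\<And>z. z \<in> sphere 0 1 \<Longrightarrow> F (- z) = - F z"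
  shows "\<exists>z \<in> sphere 0 1. F z = 0"
proof (rule ccontr)
  assume nz: "\<not> (\<exists>z \<in> sphere 0 1. F z = 0)"
  obtain e :: "nat \<Rightarrow> 'e" where e: "bij_betw e {..<DIM('e)} Basis"
    using ex_bij_betw_nat_finite[of "Basis :: 'e set"] by (auto simp: atLeast0LessThan)
  define b where "b = (\<lambda>i. if i < DIM('e) then (e i, 0::real) else (0, 1))"
  interpret basis_enumeration b unfolding b_def by (rule basis_enumeration_prod[OF e])
  define m where "m = DIM('e) - 1"
  have Sm: "Suc m = DIM('e)" by (simp add: m_def)
  have k: "Suc m < DIM('e \<times> real)" by (simp add: Sm)
  have sphere: "coord_sphere (Suc m) = sphere 0 1"
    unfolding coord_sphere_def Sm using mem_coord_span_iff[of "Suc DIM('e)"] by auto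
  define G where "G z = (F z /\<^sub>R norm (F z), 0::real)" for z
  show False
  proof (rule no_odd_map_to_equator[OF k])
    show "continuous_on (coord_sphere (Suc m)) G"
      unfolding sphere G_def using nz by (intro continuous_intros cont) auto
    show "G (- y) = - G y" if "y \<in> coord_sphere (Suc m)" for y
      using odd that by (simp add: G_def sphere)
    show "G ` coord_sphere (Suc m) \<subseteq> coord_sphere m"
    proof
      fix w assume "w \<in> G ` coord_sphere (Suc m)"
      then obtain z where z: "z \<in> sphere 0 1" "w = G z" using sphere by auto
      have "norm w = 1" using z nz by (auto simp: G_def)
      moreover have "w \<bullet> b (Suc m) = 0" using z by (simp add: G_def b_def Sm inner_Pair)
      ultimately show "w \<in> coord_sphere m" using coord_sphere_equator[OF k] by (simp add: sphere)
    qed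
  qed
qed

section \<open>Admissible measures and hyperplanes\<close>

lemma null_sets_lborel_hyperplane:
  fixes a :: "'a::euclidean_space"
  assumes "a \<noteq> 0 \<or> c \<noteq> 0"
  shows "{x. a \<bullet> x = c} \<in> null_sets lborel"
proof -
  have "{x. a \<bullet> x = c} \<in> sets lborel"
    by (simp add: borel_closed closed_hyperplane)
  moreover have "{x. a \<bullet> x = c} \<in> null_sets lebesgue"
    using negligible_hyperplane[OF assms] by (simp add: negligible_iff_null_sets)
  ultimately show ?thesis using null_sets_completion_iff by blast
qed

lemma admissible_null_sets: "admissible_measure \<mu> \<Longrightarrow> N \<in> null_sets lborel \<Longrightarrow> N \<in> null_sets \<mu>"
  by (auto simp: admissible_measure_def absolutely_continuous_def)

lemma admissible_null_hyperplane:
  fixes a :: "'a::euclidean_space"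
  shows "admissible_measure \<mu> \<Longrightarrow> a \<noteq> 0 \<or> c \<noteq> 0 \<Longrightarrow> {x. a \<bullet> x = c} \<in> null_sets \<mu>"
  by (rule admissible_null_sets[OF _ null_sets_lborel_hyperplane])

lemma AE_admissible_not_on_hyperplane:
  fixes a :: "'a::euclidean_space"
  assumes "admissible_measure \<mu>" "a \<noteq> 0 \<or> c \<noteq> 0"
  shows "AE x in \<mu>. a \<bullet> x \<noteq> c"
  using AE_not_in[OF admissible_null_hyperplane[OF assms]] by simp

lemma admissible_closed_sets: "admissible_measure \<mu> \<Longrightarrow> closed A \<Longrightarrow> A \<in> sets \<mu>"
  by (simp add: admissible_measure_def borel_closed)

lemma space_admissible: "admissible_measure \<mu> \<Longrightarrow> space \<mu> = UNIV"
  by (metis admissible_measure_def sets_eq_imp_space_eq space_borel)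

lemma measure_closed_cover_eq_1:
  assumes adm: "admissible_measure \<mu>" and "closed A" "closed B"
    and cover: "A \<union> B = UNIV" and "A \<inter> B \<subseteq> N" and "N \<in> null_sets \<mu>"
  shows "measure \<mu> A + measure \<mu> B = 1"
proof -
  interpret prob_space \<mu> using adm by (simp add: admissible_measure_def)
  have A: "A \<in> sets \<mu>" and B: "B \<in> sets \<mu>" using admissible_closed_sets[OF adm] assms by auto
  have "measure \<mu> (A \<union> B) = measure \<mu> A + measure \<mu> B - measure \<mu> (A \<inter> B)"
    by (rule measure_Un3) (simp_all add: fmeasurable_eq_sets A B)
  moreover have "A \<inter> B \<in> null_sets \<mu>" by (rule null_sets_subset[OF assms(6) _ assms(5)]) (use A B in auto)
  then have "measure \<mu> (A \<inter> B) = 0" by (rule measure_eq_0_null_sets)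
  moreover have "measure \<mu> (A \<union> B) = 1" using prob_space space_admissible[OF adm] cover by simp
  ultimately show ?thesis by simp
qed

lemma measure_halfspaces_eq_1:
  fixes a :: "'a::euclidean_space"
  assumes "admissible_measure \<mu>" "a \<noteq> 0 \<or> c \<noteq> 0"
  shows "measure \<mu> {x. a \<bullet> x \<le> c} + measure \<mu> {x. c \<le> a \<bullet> x} = 1"
  by (rule measure_closed_cover_eq_1[OF assms(1) closed_halfspace_le closed_halfspace_ge _ _
        admissible_null_hyperplane[OF assms]]) auto

lemma halfspace_pair_halfspaces:
  fixes a :: "'a::euclidean_space"
  assumes "a \<noteq> 0 \<or> c \<noteq> 0"
  shows "halfspace_pair {x. a \<bullet> x \<le> c} {x. c \<le> a \<bullet> x}"
proof (cases "a = 0")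
  case True
  with assms show ?thesis unfolding halfspace_pair_def by (cases "c < 0") auto
qed (auto simp: halfspace_pair_def)

lemma tendsto_measure_AE_eventually:
  assumes M: "prob_space M" and A: "\<And>n. A n \<in> sets M" and B: "B \<in> sets M"
    and ev: "AE x in M. eventually (\<lambda>n. x \<in> A n \<longleftrightarrow> x \<in> B) sequentially"
  shows "(\<lambda>n. measure M (A n)) \<longlonglongrightarrow> measure M B"
proof -
  interpret prob_space M by (rule M)
  have "(\<lambda>n. integral\<^sup>L M (indicator (A n) :: _ \<Rightarrow> real)) \<longlonglongrightarrow> integral\<^sup>L M (indicator B)"
  proof (rule integral_dominated_convergence[where w = "\<lambda>_. 1"])
    show "AE x in M. (\<lambda>n. indicator (A n) x :: real) \<longlonglongrightarrow> indicator B x"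
      using ev
    proof (rule AE_mp[OF _ AE_I2], intro impI)
      fix x assume "eventually (\<lambda>n. x \<in> A n \<longleftrightarrow> x \<in> B) sequentially"
      then have "eventually (\<lambda>n. indicator B x = (indicator (A n) x :: real)) sequentially"
        by (rule eventually_mono) (simp add: indicator_def)
      then show "(\<lambda>n. indicator (A n) x :: real) \<longlonglongrightarrow> indicator B x"
        by (rule Lim_transform_eventually[OF tendsto_const])
    qed
  qed (use A B in \<open>auto simp: indicator_def\<close>)
  moreover have "integral\<^sup>L M (indicator C) = measure M C" if "C \<in> sets M" for C
    using Bochner_Integration.integral_indicator[of M C] sets.sets_into_space[OF that]
    by (simp add: Int_absorb2)
  ultimately show ?thesis using A B by simp
qed

section \<open>Fair splittings of \<open>DIM('a) + 1\<close> measures\<close>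

text \<open>The coefficients \<open>4 t (1 - t)\<close> and \<open>1 - 2 t\<close> make the second half-space the whole space
  at \<open>t = 0\<close> and empty at \<open>t = 1\<close>.\<close>

definition sweep_piece :: "'a::euclidean_space \<Rightarrow> ('a \<times> real) \<times> real \<Rightarrow> 'a set" where
  "sweep_piece e z = {x. fst (fst z) \<bullet> x \<le> snd (fst z)}
     \<inter> {x. (4 * snd z * (1 - snd z)) *\<^sub>R e \<bullet> x \<le> 1 - 2 * snd z}"

lemma shrinking_halfspace_nontrivial:
  fixes e :: "'a::real_vector"
  assumes "e \<noteq> 0" shows "(4 * t * (1 - t)) *\<^sub>R e \<noteq> 0 \<or> 1 - 2 * t \<noteq> (0::real)"
proof -
  have "4 * t * (1 - t) \<noteq> 0 \<or> 1 - 2 * t \<noteq> 0" by auto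
  then show ?thesis using assms by auto
qed

lemma eventually_both_nonpos_iff:
  fixes P Q :: "nat \<Rightarrow> real"
  assumes P: "P \<longlonglongrightarrow> p" and Q: "Q \<longlonglongrightarrow> q" and "q \<noteq> 0" and "p \<noteq> 0 \<or> q > 0"
  shows "eventually (\<lambda>n. (P n \<le> 0 \<and> Q n \<le> 0) \<longleftrightarrow> (p \<le> 0 \<and> q \<le> 0)) sequentially"
proof (cases "q > 0")
  case True
  then have "eventually (\<lambda>n. 0 < Q n) sequentially" using order_tendstoD(1)[OF Q] by blast
  then show ?thesis by (rule eventually_mono) (use True in auto)
next
  case False
  then have q: "q < 0" using assms(3) by simp
  then have Qneg: "eventually (\<lambda>n. Q n < 0) sequentially" using order_tendstoD(2)[OF Q] by blast
  show ?thesis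
  proof (cases "p > 0")
    case True
    then have "eventually (\<lambda>n. 0 < P n) sequentially" using order_tendstoD(1)[OF P] by blast
    then show ?thesis by (rule eventually_mono) (use True in auto)
  next
    case False
    then have "p < 0" using assms(4) q by auto
    then have "eventually (\<lambda>n. P n < 0) sequentially" using order_tendstoD(2)[OF P] by blast
    then show ?thesis using Qneg by eventually_elim (use \<open>p < 0\<close> q in auto)
  qed
qed

lemma norm_fst_eq_0_on_sphere:
  fixes z :: "('a::euclidean_space \<times> real) \<times> real"
  assumes "z \<in> sphere 0 1" "0 \<le> snd z" "fst z = 0"
  shows "snd z = 1"
proof -
  have "norm (fst z) ^ 2 + (snd z) ^ 2 = 1"
    using assms(1) norm_Pair[of "fst z" "snd z"] by simp
  with assms(2,3) show ?thesis by (simp add: power2_eq_1_iff)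
qed

lemma eventually_mem_sweep_piece_iff:
  assumes lim: "u \<longlonglongrightarrow> z"
    and x1: "(4 * snd z * (1 - snd z)) *\<^sub>R e \<bullet> x \<noteq> 1 - 2 * snd z"
    and x2: "fst (fst z) \<bullet> x \<noteq> snd (fst z) \<or> (4 * snd z * (1 - snd z)) *\<^sub>R e \<bullet> x > 1 - 2 * snd z"
  shows "eventually (\<lambda>n. x \<in> sweep_piece e (u n) \<longleftrightarrow> x \<in> sweep_piece e z) sequentially"
proof -
  define \<gamma> where "\<gamma> s = (4 * s * (1 - s)) *\<^sub>R e" for s :: real
  have "(\<lambda>n. fst (fst (u n)) \<bullet> x - snd (fst (u n))) \<longlonglongrightarrow> fst (fst z) \<bullet> x - snd (fst z)"
    by (intro tendsto_intros lim)
  moreover have "(\<lambda>n. \<gamma> (snd (u n)) \<bullet> x - (1 - 2 * snd (u n))) \<longlonglongrightarrow> \<gamma> (snd z) \<bullet> x - (1 - 2 * snd z)"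
    unfolding \<gamma>_def by (intro tendsto_intros lim)
  ultimately have "eventually (\<lambda>n. (fst (fst (u n)) \<bullet> x - snd (fst (u n)) \<le> 0
        \<and> \<gamma> (snd (u n)) \<bullet> x - (1 - 2 * snd (u n)) \<le> 0)
      \<longleftrightarrow> (fst (fst z) \<bullet> x - snd (fst z) \<le> 0 \<and> \<gamma> (snd z) \<bullet> x - (1 - 2 * snd z) \<le> 0)) sequentially"
    by (rule eventually_both_nonpos_iff) (use x1 x2 in \<open>auto simp: \<gamma>_def\<close>)
  then show ?thesis
    by (rule eventually_mono) (simp add: sweep_piece_def \<gamma>_def)
qed

lemma continuous_on_measure_sweep_piece:
  fixes \<mu> :: "'a::euclidean_space measure"
  assumes adm: "admissible_measure \<mu>" and e: "e \<noteq> 0"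
  shows "continuous_on {z \<in> sphere 0 1. 0 \<le> snd z} (\<lambda>z. measure \<mu> (sweep_piece e z))"
proof (rule continuous_on_sequentiallyI)
  fix u and z :: "('a \<times> real) \<times> real"
  assume z: "z \<in> {z \<in> sphere 0 1. 0 \<le> snd z}" and lim: "u \<longlonglongrightarrow> z"
  define \<gamma> where "\<gamma> = (4 * snd z * (1 - snd z)) *\<^sub>R e"
  have "AE x in \<mu>. \<gamma> \<bullet> x \<noteq> 1 - 2 * snd z"
    unfolding \<gamma>_def by (intro AE_admissible_not_on_hyperplane[OF adm] shrinking_halfspace_nontrivial e)
  moreover have "AE x in \<mu>. fst (fst z) \<bullet> x \<noteq> snd (fst z) \<or> \<gamma> \<bullet> x > 1 - 2 * snd z"
  proof (cases "fst (fst z) \<noteq> 0 \<or> snd (fst z) \<noteq> 0")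
    case True
    show ?thesis using AE_admissible_not_on_hyperplane[OF adm True] by eventually_elim auto
  next
    case False
    then have "snd z = 1" using norm_fst_eq_0_on_sphere[of z] z by (simp add: prod_eq_iff)
    then show ?thesis by (simp add: \<gamma>_def)
  qed
  ultimately have "AE x in \<mu>. eventually (\<lambda>n. x \<in> sweep_piece e (u n) \<longleftrightarrow> x \<in> sweep_piece e z) sequentially"
    by eventually_elim (use lim in \<open>auto simp: \<gamma>_def intro: eventually_mem_sweep_piece_iff\<close>)
  moreover have "sweep_piece e y \<in> sets \<mu>" for y
    unfolding sweep_piece_def
    by (intro admissible_closed_sets[OF adm] closed_Int closed_halfspace_le)
  ultimately show "(\<lambda>n. measure \<mu> (sweep_piece e (u n))) \<longlonglongrightarrow> measure \<mu> (sweep_piece e z)"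
    using adm by (intro tendsto_measure_AE_eventually) (auto simp: admissible_measure_def)
qed

lemma measure_sweep_piece_antipodal:
  fixes \<mu> :: "'a::euclidean_space measure"
  assumes adm: "admissible_measure \<mu>" and z: "z \<in> sphere 0 1" "snd z = 0"
  shows "measure \<mu> (sweep_piece e (- z)) = 1 - measure \<mu> (sweep_piece e z)"
proof -
  have "fst z \<noteq> 0"
  proof
    assume "fst z = 0"
    then have "z = 0" using z(2) by (simp add: prod_eq_iff)
    then show False using z(1) by simp
  qed
  then have "fst (fst z) \<noteq> 0 \<or> snd (fst z) \<noteq> 0" by (simp add: prod_eq_iff)
  from measure_halfspaces_eq_1[OF adm this] show ?thesis
    using z(2) by (simp add: sweep_piece_def)
qed

lemma continuous_odd_extension_upper_hemisphere:
  fixes f :: "'a::real_normed_vector \<times> real \<Rightarrow> 'b::real_normed_vector"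
  assumes cont: "continuous_on {z \<in> sphere 0 1. 0 \<le> snd z} f"
    and equator: "\<And>z. z \<in> sphere 0 1 \<Longrightarrow> snd z = 0 \<Longrightarrow> f (- z) = - f z"
  obtains F where "continuous_on (sphere 0 1) F" "\<And>z. z \<in> sphere 0 1 \<Longrightarrow> F (- z) = - F z"
    "\<And>z. z \<in> sphere 0 1 \<Longrightarrow> 0 \<le> snd z \<Longrightarrow> F z = f z"
proof
  define F where "F z = (if snd z \<le> 0 then - f (- z) else f z)" for z
  show "continuous_on (sphere 0 1) F"
    unfolding F_def
  proof (rule continuous_on_cases_le)
    have "continuous_on {z \<in> sphere 0 1. snd z \<le> 0} (f \<circ> uminus)"
    proof (rule continuous_on_compose[OF _ continuous_on_subset[OF cont]])
      show "uminus ` {z \<in> sphere (0::'a \<times> real) 1. snd z \<le> 0} \<subseteq> {z \<in> sphere 0 1. 0 \<le> snd z}"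
        by (auto simp: image_subset_iff simp del: norm_Pair)
    qed (intro continuous_intros)
    then show "continuous_on {z \<in> sphere 0 1. snd z \<le> 0} (\<lambda>z. - f (- z))"
      by (intro continuous_intros) (simp add: o_def)
    show "- f (- z) = f z" if "z \<in> sphere 0 1" "snd z = 0" for z
      using equator[OF that] by simp
  qed (use cont in \<open>auto intro: continuous_intros\<close>)
  show "F (- z) = - F z" if "z \<in> sphere 0 1" for z
    using equator[OF that] by (cases "snd z = 0") (auto simp: F_def)
  show "F z = f z" if "z \<in> sphere 0 1" "0 \<le> snd z" for z
    using equator[OF that(1)] that(2) by (auto simp: F_def)
qed

lemma exists_bisecting_sweep_piece:
  fixes \<mu> :: "nat \<Rightarrow> 'a::euclidean_space measure"
  assumes adm: "\<And>j. j < DIM('a) + 1 \<Longrightarrow> admissible_measure (\<mu> j)" and e: "e \<noteq> 0"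
  obtains w where "w \<in> sphere 0 1" "0 \<le> snd w"
    "\<And>j. j < DIM('a) + 1 \<Longrightarrow> measure (\<mu> j) (sweep_piece e w) = 1/2"
proof -
  obtain c :: "nat \<Rightarrow> 'a \<times> real" where c: "bij_betw c {..<DIM('a \<times> real)} Basis"
    using ex_bij_betw_nat_finite[of "Basis :: ('a \<times> real) set"] by (auto simp: atLeast0LessThan)
  interpret basis_enumeration c by (rule basis_enumeration.intro[OF c])
  define f where "f z = (\<Sum>j<DIM('a \<times> real). (measure (\<mu> j) (sweep_piece e z) - 1/2) *\<^sub>R c j)" for z
  have cont_f: "continuous_on {z \<in> sphere 0 1. 0 \<le> snd z} f"
    unfolding f_def by (intro continuous_intros continuous_on_measure_sweep_piece adm e) simp
  have odd_f: "f (- z) = - f z" if z: "z \<in> sphere 0 1" "snd z = 0" for z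
  proof -
    have *: "measure (\<mu> j) (sweep_piece e (- z)) - 1/2 = - (measure (\<mu> j) (sweep_piece e z) - 1/2)"
      if "j < DIM('a \<times> real)" for j
      using measure_sweep_piece_antipodal[OF adm z] that by simp
    show ?thesis
      unfolding f_def sum_negf[symmetric] by (rule sum.cong) (simp_all only: lessThan_iff * scaleR_minus_left)
  qed
  obtain F where "continuous_on (sphere 0 1) F" and odd_F: "\<And>z. z \<in> sphere 0 1 \<Longrightarrow> F (- z) = - F z"
    and F_eq: "\<And>z. z \<in> sphere 0 1 \<Longrightarrow> 0 \<le> snd z \<Longrightarrow> F z = f z"
    using continuous_odd_extension_upper_hemisphere[OF cont_f odd_f] by blast
  then obtain z where z: "z \<in> sphere 0 1" "F z = 0" using Borsuk_Ulam by blast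
  \<comment> \<open>By oddness \<open>- z\<close> is a zero as well, so one of them lies on the upper hemisphere.\<close>
  obtain w where w: "w \<in> sphere 0 1" "0 \<le> snd w" "f w = 0"
  proof (cases "0 \<le> snd z")
    case True
    then show thesis using that z F_eq by auto
  next
    case False
    then show thesis using that[of "- z"] z F_eq[of "- z"] odd_F[of z] by auto
  qed
  have "measure (\<mu> j) (sweep_piece e w) - 1/2 = 0" if "j < DIM('a) + 1" for j
    using inner_embed_basis[of j "\<lambda>k. measure (\<mu> k) (sweep_piece e w) - 1/2"] that w(3)
    by (simp add: f_def embed_def)
  with w show thesis using that by auto
qed

lemma iter_cut_two_cuts:
  assumes "halfspace_pair H1 H2" "halfspace_pair G1 G2"
  shows "iter_cut [H1 \<inter> G1, H2, H1 \<inter> G2]"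
proof -
  have "iter_cut [H1, H2]"
    using iter_cut.cut[OF iter_cut.start _ assms(1), of 0] by simp
  from iter_cut.cut[OF this _ assms(2), of 0] show ?thesis by simp
qed

lemma Union_first_vs_rest:
  "\<Union>{[K0, K1, K2] ! i | i. i < 3 \<and> (if i = 0 then 0 else 1 :: nat) = s}
     = (if s = 0 then K0 else if s = 1 then K1 \<union> K2 else {})"
proof -
  have "{[K0, K1, K2] ! i | i. i < 3 \<and> (if i = 0 then 0 else 1 :: nat) = s}
      = (\<lambda>i. [K0, K1, K2] ! i) ` {i. i < (3::nat) \<and> (if i = 0 then 0 else 1 :: nat) = s}"
    by blast
  moreover have "{i. i < (3::nat) \<and> (if i = 0 then 0 else 1 :: nat) = s}
      = (if s = 0 then {0} else if s = 1 then {1, 2} else {})"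
    by (auto simp: less_Suc_eq numeral_3_eq_3)
  ultimately show ?thesis by (simp add: numeral_2_eq_2)
qed

lemma fair_split_by_two_cuts:
  fixes a \<gamma> :: "'a::euclidean_space" and m :: nat
  assumes ac: "a \<noteq> 0 \<or> c \<noteq> 0" and \<gamma>\<delta>: "\<gamma> \<noteq> 0 \<or> \<delta> \<noteq> 0"
    and adm: "\<And>j. j < m \<Longrightarrow> admissible_measure (\<mu> j)"
    and half: "\<And>j. j < m \<Longrightarrow> measure (\<mu> j) ({x. a \<bullet> x \<le> c} \<inter> {x. \<gamma> \<bullet> x \<le> \<delta>}) = 1/2"
  shows "\<exists>Ks lab. iter_cut Ks \<and> length Ks = 3 \<and> (\<forall>i<3. lab i < (2::nat)) \<and>
           (\<forall>j<m. \<forall>s<2. measure (\<mu> j) (\<Union>{Ks ! i | i. i < 3 \<and> lab i = s}) = 1 / real 2)"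
proof (intro exI conjI allI impI)
  define K0 where "K0 = {x. \<gamma> \<bullet> x \<le> \<delta>} \<inter> {x. a \<bullet> x \<le> c}"
  define K1 where "K1 = {x. \<delta> \<le> \<gamma> \<bullet> x}"
  define K2 where "K2 = {x. \<gamma> \<bullet> x \<le> \<delta>} \<inter> {x. c \<le> a \<bullet> x}"
  show "iter_cut [K0, K1, K2]"
    unfolding K0_def K1_def K2_def
    by (rule iter_cut_two_cuts[OF halfspace_pair_halfspaces[OF \<gamma>\<delta>] halfspace_pair_halfspaces[OF ac]])
  show "length [K0, K1, K2] = 3" "(if i = 0 then 0 else 1) < (2::nat)" for i by simp_all
  fix j s :: nat assume j: "j < m" and "s < 2"
  have "measure (\<mu> j) K0 + measure (\<mu> j) (K1 \<union> K2) = 1"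
  proof (rule measure_closed_cover_eq_1[OF adm[OF j]])
    show "closed K0" "closed (K1 \<union> K2)"
      by (simp_all add: K0_def K1_def K2_def closed_Int closed_Un closed_halfspace_le closed_halfspace_ge)
    show "K0 \<inter> (K1 \<union> K2) \<subseteq> {x. \<gamma> \<bullet> x = \<delta>} \<union> {x. a \<bullet> x = c}"
      by (auto simp: K0_def K1_def K2_def)
    show "{x. \<gamma> \<bullet> x = \<delta>} \<union> {x. a \<bullet> x = c} \<in> null_sets (\<mu> j)"
      using admissible_null_hyperplane[OF adm[OF j] \<gamma>\<delta>] admissible_null_hyperplane[OF adm[OF j] ac]
      by auto
  qed (auto simp: K0_def K1_def K2_def)
  moreover have "measure (\<mu> j) K0 = 1/2" using half[OF j] by (simp add: K0_def Int_commute)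
  ultimately show "measure (\<mu> j) (\<Union>{[K0, K1, K2] ! i | i. i < 3 \<and> (if i = 0 then 0 else 1) = s}) = 1 / real 2"
    using \<open>s < 2\<close> by (auto simp: Union_first_vs_rest)
qed

lemma fair_splittable_3_2_DIM_plus_1: "fair_splittable 3 2 TYPE('a::euclidean_space) (DIM('a) + 1)"
  unfolding fair_splittable_def
proof (intro allI impI)
  fix \<mu> :: "nat \<Rightarrow> 'a measure" assume adm: "\<forall>j<DIM('a) + 1. admissible_measure (\<mu> j)"
  obtain e :: 'a where "e \<in> Basis" using nonempty_Basis by blast
  then have e: "e \<noteq> 0" by auto
  obtain w where w: "w \<in> sphere 0 1" "0 \<le> snd w"
    and half: "\<And>j. j < DIM('a) + 1 \<Longrightarrow> measure (\<mu> j) (sweep_piece e w) = 1/2"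
    using exists_bisecting_sweep_piece[of \<mu> e] adm e by blast
  have "fst w \<noteq> 0"
  proof
    assume "fst w = 0"
    then have "sweep_piece e w = {}"
      using norm_fst_eq_0_on_sphere[OF w] by (simp add: sweep_piece_def)
    then show False using half[of 0] by simp
  qed
  then have ac: "fst (fst w) \<noteq> 0 \<or> snd (fst w) \<noteq> 0" by (simp add: prod_eq_iff)
  show "\<exists>Ks lab. iter_cut Ks \<and> length Ks = 3 \<and> (\<forall>i<3. lab i < (2::nat)) \<and>
      (\<forall>j<DIM('a) + 1. \<forall>s<2. measure (\<mu> j) (\<Union>{Ks ! i | i. i < 3 \<and> lab i = s}) = 1 / real 2)"
  proof (rule fair_split_by_two_cuts[OF ac shrinking_halfspace_nontrivial[OF e, of "snd w"]])
    show "admissible_measure (\<mu> j)" if "j < DIM('a) + 1" for j using adm that by simp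
    show "measure (\<mu> j) ({x. fst (fst w) \<bullet> x \<le> snd (fst w)}
        \<inter> {x. (4 * snd w * (1 - snd w)) *\<^sub>R e \<bullet> x \<le> 1 - 2 * snd w}) = 1/2" if "j < DIM('a) + 1" for j
      using half[OF that] by (simp add: sweep_piece_def)
  qed
qed

section \<open>No fair splitting of \<open>DIM('a) + 2\<close> measures\<close>

lemma halfspace_pair_closed_convex:
  assumes "halfspace_pair H1 H2"
  shows "closed H1 \<and> convex H1 \<and> closed H2 \<and> convex H2"
  using assms unfolding halfspace_pair_def
  by (auto simp: closed_halfspace_le closed_halfspace_ge convex_halfspace_le convex_halfspace_ge)

lemma iter_cut_closed_convex: "iter_cut Ks \<Longrightarrow> K \<in> set Ks \<Longrightarrow> closed K \<and> convex K"
proof (induction arbitrary: K rule: iter_cut.induct)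
  case (cut Ks i H1 H2)
  have "closed (Ks ! i) \<and> convex (Ks ! i)" using cut.IH cut.hyps(2) by simp
  then have "closed (Ks ! i \<inter> H) \<and> convex (Ks ! i \<inter> H)" if "H \<in> {H1, H2}" for H
    using halfspace_pair_closed_convex[OF cut.hyps(3)] that by (auto intro: closed_Int convex_Int)
  moreover have "set (Ks[i := Ks ! i \<inter> H1]) \<subseteq> insert (Ks ! i \<inter> H1) (set Ks)"
    by (rule set_update_subset_insert)
  ultimately show ?case using cut.IH cut.prems by auto
qed auto

lemma label_used_at_most_once:
  fixes lab :: "nat \<Rightarrow> nat"
  assumes "\<forall>i<3. lab i < 2"
  obtains s i where "s < 2" "\<And>k. k < 3 \<Longrightarrow> lab k = s \<Longrightarrow> k = i"
proof -
  have l: "lab 0 < 2" "lab 1 < 2" "lab 2 < 2" using assms by auto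
  have less_3: "k < 3 \<longleftrightarrow> k = 0 \<or> k = 1 \<or> k = 2" for k :: nat by auto
  consider "lab 0 \<noteq> lab 1" "lab 0 \<noteq> lab 2" | "lab 1 \<noteq> lab 0" "lab 1 \<noteq> lab 2"
    | "lab 2 \<noteq> lab 0" "lab 2 \<noteq> lab 1" | "lab 0 = lab 1" "lab 1 = lab 2" by metis
  then show thesis
  proof cases
    case 1
    then show ?thesis using l by (intro that[of "lab 0" 0]) (auto simp: less_3)
  next
    case 2
    then show ?thesis using l by (intro that[of "lab 1" 1]) (auto simp: less_3)
  next
    case 3
    then show ?thesis using l by (intro that[of "lab 2" 2]) (auto simp: less_3)
  next
    case 4
    have "lab k \<noteq> 1 - lab 0" if "k < 3" for k
      using that 4 l(1) by (auto simp: less_3; arith)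
    then show ?thesis using l by (intro that[of "1 - lab 0" 0]) auto
  qed
qed

lemma iter_cut_class_closed_convex:
  assumes "iter_cut Ks" "length Ks = 3" "\<forall>i<3. lab i < (2::nat)"
  obtains s where "s < 2" "closed (\<Union>{Ks ! i | i. i < 3 \<and> lab i = s})"
    "convex (\<Union>{Ks ! i | i. i < 3 \<and> lab i = s})"
proof -
  obtain s i where s: "s < 2" and i: "\<And>k. k < 3 \<Longrightarrow> lab k = s \<Longrightarrow> k = i"
    using label_used_at_most_once[OF assms(3)] by blast
  have "{Ks ! k | k. k < 3 \<and> lab k = s} = {} \<or> {Ks ! k | k. k < 3 \<and> lab k = s} = {Ks ! i} \<and> i < 3"
    using i by blast
  then have "closed (\<Union>{Ks ! k | k. k < 3 \<and> lab k = s}) \<and> convex (\<Union>{Ks ! k | k. k < 3 \<and> lab k = s})"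
  proof (elim disjE)
    assume "{Ks ! k | k. k < 3 \<and> lab k = s} = {}"
    then show ?thesis by (metis Union_empty closed_empty convex_empty)
  next
    assume "{Ks ! k | k. k < 3 \<and> lab k = s} = {Ks ! i} \<and> i < 3"
    then show ?thesis using iter_cut_closed_convex[OF assms(1), of "Ks ! i"] assms(2) by simp
  qed
  with s that show thesis by blast
qed

lemma abs_inner_le_sum_Basis_on_cube:
  fixes a v x :: "'a::euclidean_space"
  assumes x: "x \<in> cbox (v - One) (v + One)"
  shows "\<bar>a \<bullet> (x - v)\<bar> \<le> (\<Sum>i\<in>Basis. \<bar>a \<bullet> i\<bar>)"
proof -
  have "\<bar>a \<bullet> (x - v)\<bar> = \<bar>\<Sum>i\<in>Basis. (a \<bullet> i) * ((x - v) \<bullet> i)\<bar>" by (subst euclidean_inner) (rule refl)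
  also have "\<dots> \<le> (\<Sum>i\<in>Basis. \<bar>(a \<bullet> i) * ((x - v) \<bullet> i)\<bar>)" by (rule sum_abs)
  also have "\<dots> \<le> (\<Sum>i\<in>Basis. \<bar>a \<bullet> i\<bar>)"
  proof (rule sum_mono)
    fix i :: 'a assume i: "i \<in> Basis"
    have "(v - One) \<bullet> i \<le> x \<bullet> i" "x \<bullet> i \<le> (v + One) \<bullet> i" using x i by (simp_all add: mem_box)
    then have "\<bar>(x - v) \<bullet> i\<bar> \<le> 1" using i by (simp add: inner_diff_left inner_add_left abs_le_iff)
    then have "\<bar>a \<bullet> i\<bar> * \<bar>(x - v) \<bullet> i\<bar> \<le> \<bar>a \<bullet> i\<bar> * 1" by (intro mult_left_mono) auto
    then show "\<bar>(a \<bullet> i) * ((x - v) \<bullet> i)\<bar> \<le> \<bar>a \<bullet> i\<bar>" by (simp add: abs_mult)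
  qed
  finally show ?thesis .
qed

context basis_enumeration
begin

text \<open>Cubes \<open>0, \<dots>, DIM('c)\<close> sit at the vertices of a large simplex around the origin, cube
  \<open>Suc DIM('c)\<close> at the origin. The scale \<open>2 (2 DIM('c) + 1)\<close> makes every direction \<open>a\<close> see some
  vertex at height at least \<open>2 \<Sum>\<bar>a \<bullet> i\<bar>\<close>, i.e. beyond both unit cubes.\<close>

definition cube_center :: "nat \<Rightarrow> 'c" where
  "cube_center j = (if j < DIM('c) then (2 * (2 * real DIM('c) + 1)) *\<^sub>R b j
     else if j = DIM('c) then - ((2 * (2 * real DIM('c) + 1)) *\<^sub>R (\<Sum>k<DIM('c). b k)) else 0)"

definition cube :: "nat \<Rightarrow> 'c set" where
  "cube j = cbox (cube_center j - One) (cube_center j + One)"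

definition uniform_on_cube :: "nat \<Rightarrow> 'c measure" where
  "uniform_on_cube j = uniform_measure lborel (cube j)"

lemma sum_Basis_basis: "(\<Sum>i\<in>Basis. f i) = (\<Sum>k<DIM('c). f (b k))"
  using sum.reindex_bij_betw[OF bij_betw_basis, of f] by simp

lemma exists_vertex_inner_ge: "\<exists>j\<le>DIM('c). 2 * (\<Sum>i\<in>Basis. \<bar>a \<bullet> i\<bar>) \<le> a \<bullet> cube_center j"
proof -
  define D where "D = 2 * real DIM('c) + 1"
  define \<alpha> where "\<alpha> k = a \<bullet> b k" for k
  define T where "T = (\<Sum>k<DIM('c). \<bar>\<alpha> k\<bar>)"
  have T: "(\<Sum>i\<in>Basis. \<bar>a \<bullet> i\<bar>) = T" unfolding T_def \<alpha>_def by (rule sum_Basis_basis)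
  have "0 \<le> T" unfolding T_def by (intro sum_nonneg) auto
  show ?thesis
  proof (cases "\<exists>k<DIM('c). T \<le> D * \<alpha> k")
    case True
    then obtain k where k: "k < DIM('c)" "T \<le> D * \<alpha> k" by blast
    then have "a \<bullet> cube_center k = 2 * D * \<alpha> k" by (simp add: cube_center_def D_def \<alpha>_def)
    then show ?thesis using k T by (intro exI[of _ k]) auto
  next
    case False
    \<comment> \<open>Then the positive parts of the \<open>\<alpha> k\<close> are small, so the last vertex works.\<close>
    define P where "P = (\<Sum>k<DIM('c). max (\<alpha> k) 0)"
    have lt: "D * \<alpha> k < T" if "k < DIM('c)" for k using False that by auto
    have "D * max (\<alpha> k) 0 \<le> T" if "k < DIM('c)" for k
      using lt[OF that] \<open>0 \<le> T\<close> by (cases "\<alpha> k \<le> 0") (simp_all add: max_def)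
    then have "(\<Sum>k<DIM('c). D * max (\<alpha> k) 0) \<le> (\<Sum>k<DIM('c). T)" by (intro sum_mono) auto
    then have DP: "D * P \<le> real DIM('c) * T" by (simp add: P_def sum_distrib_left)
    have "(\<Sum>k<DIM('c). - \<alpha> k) = (\<Sum>k<DIM('c). \<bar>\<alpha> k\<bar> - 2 * max (\<alpha> k) 0)"
      by (rule sum.cong) (auto simp: max_def abs_if)
    then have "- (\<Sum>k<DIM('c). \<alpha> k) = (\<Sum>k<DIM('c). \<bar>\<alpha> k\<bar> - 2 * max (\<alpha> k) 0)"
      by (simp add: sum_negf)
    also have "\<dots> = T - 2 * P" by (simp add: T_def P_def sum_subtractf sum_distrib_left)
    finally have sum_\<alpha>: "- (\<Sum>k<DIM('c). \<alpha> k) = T - 2 * P" .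
    have "a \<bullet> cube_center DIM('c) = 2 * D * (- (\<Sum>k<DIM('c). \<alpha> k))"
      by (simp add: cube_center_def D_def \<alpha>_def inner_sum_right sum_distrib_left)
    also have "\<dots> = 2 * D * T - 4 * (D * P)" by (simp add: sum_\<alpha> algebra_simps)
    finally have "a \<bullet> cube_center DIM('c) = 2 * D * T - 4 * (D * P)" .
    moreover have "2 * T = 2 * D * T - 4 * (real DIM('c) * T)" by (simp add: D_def algebra_simps)
    ultimately have "2 * T \<le> a \<bullet> cube_center DIM('c)" using DP by linarith
    then show ?thesis using T by (intro exI[of _ "DIM('c)"]) auto
  qed
qed

lemma exists_cube_beyond:
  assumes y: "y \<in> cube (Suc DIM('c))"
  obtains j where "j \<le> DIM('c)" "\<And>q. q \<in> cube j \<Longrightarrow> a \<bullet> y \<le> a \<bullet> q"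
proof -
  obtain j where j: "j \<le> DIM('c)" "2 * (\<Sum>i\<in>Basis. \<bar>a \<bullet> i\<bar>) \<le> a \<bullet> cube_center j"
    using exists_vertex_inner_ge by blast
  show thesis
  proof (rule that[OF j(1)])
    fix q assume "q \<in> cube j"
    then have "a \<bullet> cube_center j - (\<Sum>i\<in>Basis. \<bar>a \<bullet> i\<bar>) \<le> a \<bullet> q"
      using abs_inner_le_sum_Basis_on_cube[of q "cube_center j" a]
      by (simp add: cube_def inner_diff_right abs_le_iff)
    moreover have "a \<bullet> y \<le> (\<Sum>i\<in>Basis. \<bar>a \<bullet> i\<bar>)"
      using abs_inner_le_sum_Basis_on_cube[of y 0 a] y by (simp add: cube_def cube_center_def)
    ultimately show "a \<bullet> y \<le> a \<bullet> q" using j(2) by linarith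
  qed
qed

lemma emeasure_cube: "emeasure lborel (cube j) = ennreal (2 ^ DIM('c))"
proof -
  have "\<forall>i\<in>Basis. (cube_center j - One) \<bullet> i \<le> (cube_center j + One) \<bullet> i"
    by (simp add: inner_diff_left inner_add_left)
  moreover have "(\<Prod>i\<in>Basis. ((cube_center j + One) - (cube_center j - One)) \<bullet> i) = (\<Prod>i\<in>(Basis::'c set). 2)"
    by (rule prod.cong) (simp_all add: inner_diff_left inner_add_left)
  ultimately show ?thesis by (simp add: cube_def emeasure_lborel_cbox_eq)
qed

lemma admissible_uniform_on_cube: "admissible_measure (uniform_on_cube j)"
  unfolding admissible_measure_def uniform_on_cube_def
proof (intro conjI)
  show "prob_space (uniform_measure lborel (cube j))"
    by (rule prob_space_uniform_measure) (simp_all add: emeasure_cube)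
  show "absolutely_continuous lborel (uniform_measure lborel (cube j))"
    unfolding uniform_measure_def by (rule absolutely_continuousI_density) (simp add: cube_def)
qed simp

lemma emeasure_uniform_on_cube:
  "closed K \<Longrightarrow> emeasure (uniform_on_cube j) K = emeasure lborel (cube j \<inter> K) / emeasure lborel (cube j)"
  unfolding uniform_on_cube_def by (rule emeasure_uniform_measure) (simp_all add: cube_def borel_closed)

lemma measure_uniform_on_cube_disjoint: "closed K \<Longrightarrow> K \<inter> cube j = {} \<Longrightarrow> measure (uniform_on_cube j) K = 0"
  by (simp add: measure_def emeasure_uniform_on_cube Int_commute)

lemma measure_uniform_on_cube_superset:
  assumes "closed K" "cube j \<subseteq> K"
  shows "measure (uniform_on_cube j) K = 1"
proof -
  have "emeasure (uniform_on_cube j) K = emeasure lborel (cube j) / emeasure lborel (cube j)"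
    using assms by (simp add: emeasure_uniform_on_cube Int_absorb2)
  also have "\<dots> = 1" by (simp add: emeasure_cube ennreal_divide_self)
  finally show ?thesis by (simp add: measure_def)
qed

lemma not_fair_splittable_3_2_DIM_plus_2: "\<not> fair_splittable 3 2 TYPE('c) (DIM('c) + 2)"
proof
  assume "fair_splittable 3 2 TYPE('c) (DIM('c) + 2)"
  then have "\<exists>Ks lab. iter_cut Ks \<and> length Ks = 3 \<and> (\<forall>i<3. lab i < (2::nat)) \<and>
      (\<forall>j<DIM('c) + 2. \<forall>s<2. measure (uniform_on_cube j) (\<Union>{Ks ! i | i. i < 3 \<and> lab i = s}) = 1 / real 2)"
    unfolding fair_splittable_def using admissible_uniform_on_cube by blast
  then obtain Ks and lab :: "nat \<Rightarrow> nat" where Ks: "iter_cut Ks" "length Ks = 3" "\<forall>i<3. lab i < 2"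
    and half: "\<And>j s. j < DIM('c) + 2 \<Longrightarrow> s < 2 \<Longrightarrow>
      measure (uniform_on_cube j) (\<Union>{Ks ! i | i. i < 3 \<and> lab i = s}) = 1/2"
    by auto
  obtain s where s: "s < 2" and closed: "closed (\<Union>{Ks ! i | i. i < 3 \<and> lab i = s})"
    and convex: "convex (\<Union>{Ks ! i | i. i < 3 \<and> lab i = s})"
    using iter_cut_class_closed_convex[OF Ks] by blast
  define K where "K = \<Union>{Ks ! i | i. i < 3 \<and> lab i = s}"
  have half_K: "measure (uniform_on_cube j) K = 1/2" if "j < DIM('c) + 2" for j
    using half[OF that s] by (simp add: K_def)
  have meets: "K \<inter> cube j \<noteq> {}" if "j \<le> DIM('c)" for j
    using measure_uniform_on_cube_disjoint[OF closed[folded K_def]] half_K[of j] that by fastforce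
  have "\<not> cube (Suc DIM('c)) \<subseteq> K"
    using measure_uniform_on_cube_superset[OF closed[folded K_def]] half_K[of "Suc DIM('c)"] by fastforce
  then obtain y where y: "y \<in> cube (Suc DIM('c))" "y \<notin> K" by blast
  obtain a \<beta> where "a \<bullet> y < \<beta>" and K_above: "\<forall>x\<in>K. \<beta> < a \<bullet> x"
    using separating_hyperplane_closed_point[OF convex[folded K_def] closed[folded K_def] y(2)] by blast
  moreover obtain j where "j \<le> DIM('c)" and below_y: "\<And>q. q \<in> cube j \<Longrightarrow> - a \<bullet> y \<le> - a \<bullet> q"
    using exists_cube_beyond[OF y(1)] by blast
  moreover obtain q where "q \<in> K" "q \<in> cube j" using meets[OF \<open>j \<le> DIM('c)\<close>] by blast
  ultimately show False using K_above below_y[of q] by force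
qed

end

lemma fair_splittable_mono:
  assumes fair: "fair_splittable n r TYPE('a::euclidean_space) m" and "m' \<le> m"
    and \<nu>: "admissible_measure (\<nu> :: 'a measure)"
  shows "fair_splittable n r TYPE('a) m'"
  unfolding fair_splittable_def
proof (intro allI impI)
  fix \<mu> :: "nat \<Rightarrow> 'a measure" assume adm: "\<forall>j<m'. admissible_measure (\<mu> j)"
  define \<mu>' where "\<mu>' j = (if j < m' then \<mu> j else \<nu>)" for j
  have "\<forall>j<m. admissible_measure (\<mu>' j)" using adm \<nu> by (simp add: \<mu>'_def)
  with fair obtain Ks lab where Ks: "iter_cut Ks" "length Ks = n" "\<forall>i<n. lab i < r"
    and fair_\<mu>': "\<forall>j<m. \<forall>s<r. measure (\<mu>' j) (\<Union>{Ks ! i | i. i < n \<and> lab i = s}) = 1 / real r"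
    unfolding fair_splittable_def by blast
  have "measure (\<mu> j) (\<Union>{Ks ! i | i. i < n \<and> lab i = s}) = 1 / real r" if "j < m'" "s < r" for j s
  proof -
    have "j < m" using that \<open>m' \<le> m\<close> by simp
    with fair_\<mu>' that(2) have "measure (\<mu>' j) (\<Union>{Ks ! i | i. i < n \<and> lab i = s}) = 1 / real r" by blast
    with that(1) show ?thesis by (simp add: \<mu>'_def)
  qed
  with Ks show "\<exists>Ks lab. iter_cut Ks \<and> length Ks = n \<and> (\<forall>i<n. lab i < r) \<and>
      (\<forall>j<m'. \<forall>s<r. measure (\<mu> j) (\<Union>{Ks ! i | i. i < n \<and> lab i = s}) = 1 / real r)"
    by blast
qed

theorem mainTheorem5:
  shows "M2 3 2 TYPE('a::euclidean_space) = DIM('a) + 1"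
proof -
  obtain b :: "nat \<Rightarrow> 'a" where "bij_betw b {..<DIM('a)} Basis"
    using ex_bij_betw_nat_finite[of "Basis :: 'a set"] by (auto simp: atLeast0LessThan)
  then interpret basis_enumeration b by (rule basis_enumeration.intro)
  have "m \<le> DIM('a) + 1" if "fair_splittable 3 2 TYPE('a) m" for m
  proof (rule ccontr)
    assume "\<not> m \<le> DIM('a) + 1"
    then have "fair_splittable 3 2 TYPE('a) (DIM('a) + 2)"
      by (intro fair_splittable_mono[OF that _ admissible_uniform_on_cube]) simp
    with not_fair_splittable_3_2_DIM_plus_2 show False ..
  qed
  then show ?thesis
    unfolding M2_def by (intro Greatest_equality fair_splittable_3_2_DIM_plus_1)
qed

end
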